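(* In the setting described in the context, with all standing assumptions in force, for every $i\in\{1,\dots,N\}$: $$\lim_{t\to\infty}\Big\|\mathbf y_{(i,:)}^t-\frac1N\sum_{j=1}^N\nabla f_j(\mathbf x_{(j,:)}^t)\Big\|=0\qquad\text{and}\qquad \sum_{t=0}^\infty\gamma^t\Big\|\mathbf y_{(i,:)}^t-\frac1N\sum_{j=1}^N\nabla f_j(\mathbf x_{(j,:)}^t)\Big\|<\infty .$$
   Context: Problem. Let $N,B,d\ge1$. A vector $\mathbf x\in\mathbb R^{dB}$ is partitioned into blocks $\mathbf x=(\mathbf x_1,\dots,\mathbf x_B)$ with $\mathbf x_\ell\in\mathbb R^d$, and $\nabla_\ell$ denotes the partial gradient with respect to block $\ell$. Problem (P) is $$\min_{\mathbf x}\ U(\mathbf x)=\sum_{i=1}^Nf_i(\mathbf x)+\sum_{\ell=1}^B r_\ell(\mathbf x_\ell)\quad\text{s.t. }\mathbf x_\ell\in\mathcal K_\ell,\ \ell=1,\dots,B,$$ with $\mathcal K=\mathcal K_1\times\dots\times\mathcal K_B$. Problem assumptions: - each $\mathcal K_\ell\subseteq\mathbb R^d$ is nonempty, closed and convex; - each $f_i:\mathbb R^{dB}\to\mathbb R$ is $C^1$ on an open set containing $\mathcal K$, and $\nabla f_i$ is $L_i$-Lipschitz continuous and bounded on $\mathcal K$; - each $r_\ell:\mathbb R^d\to\mathbb R$ is convex with bounded subgradients on $\mathcal K_\ell$; - $U$ is coercive on $\mathcal K$. Network. $\mathcal G=(\{1,\dots,N\},\mathcal E)$ is a fixed, strongly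 connected digraph containing all self-loops. The in-neighbor set of $i$ is $\mathcal N_i=\{j:(j,i)\in\mathcal E\}$. Block selection. At each iteration $t\ge0$, agent $i$ picks $\ell_i^t\in\{1,\dots,B\}$. For each $i$ there is a finite $T_i>0$ with $\bigcup_{\tau=0}^{T_i-1}\{\ell_i^{t+\tau}\}=\{1,\dots,B\}$ for all $t\ge0$. Define $\mathcal N_{i,\ell}^t=\{j\in\mathcal N_i:\ell_j^t=\ell\}\cup\{i\}$ and $\mathcal E_\ell^t=\{(j,i)\in\mathcal E:j\in\mathcal N_{i,\ell}^t\}$. Weights. For each $\ell$ and $t$, $A_\ell^t=[a_{ij\ell}^t]$ satisfies $a_{ij\ell}^t>\kappa$ if $(j,i)\in\mathcal E_\ell^t$, $a_{ij\ell}^t=0$ otherwise (for a fixed $\kappa>0$), and $\mathbf 1^\top A_\ell^t=\mathbf 1^\top$. Surrogates. For each $i,\ell$, $\tilde f_{i,\ell}:\mathcal K_\ell\times\mathcal K\to\mathbb R$ satisfies: - $\tilde f_{i,\ell}(\cdot;\mathbf x)$ is $C^1$ and $\tau_i$-strongly convex on $\mathcal K_\ell$ uniformly in $\mathbf x\in\mathcal K$, with $\tau_i>0$; - $\nabla\tilde f_{i,\ell}(\mathbf x_\ell;\mathbf x)=\nabla_\ell f_i(\mathbf x)$ for all $\mathbf x\in\mathcal K$, where $\nabla\tilde f_{i,\ell}$ is the gradient in the first argument and $\mathbf x_\ell$ is the $\ell$-th block of $\mathbf x$; - $\nabla\tilde f_{i,\ell}(\mathbf z;\cdot)$ is Lipschitz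 continuous on $\mathcal K$ uniformly in $\mathbf z\in\mathcal K_\ell$. For $\mathbf w\in\mathcal K$ and $\mathbf g\in\mathbb R^d$ let $$\hat f_{i,\ell}(\mathbf z;\mathbf w,\mathbf g)=\tilde f_{i,\ell}(\mathbf z;\mathbf w)+(N\mathbf g-\nabla_\ell f_i(\mathbf w))^\top(\mathbf z-\mathbf w_\ell).$$ Step sizes. $0<\gamma^t\le1$, $\gamma^{t+1}\le\gamma^t$, $\sum_t\gamma^t=\infty$, $\sum_t(\gamma^t)^2<\infty$. Algorithm. Agent $i$ holds $\mathbf x_{(i,:)}^t=(\mathbf x_{(i,\ell)}^t)_\ell$, $\mathbf y_{(i,:)}^t=(\mathbf y_{(i,\ell)}^t)_\ell$ in $\mathbb R^{dB}$ and scalars $\phi_{(i,\ell)}^t$. Initialization: $\mathbf x_{(i,:)}^0\in\mathcal K$ arbitrary, $\mathbf y_{(i,:)}^0=\nabla f_i(\mathbf x_{(i,:)}^0)$, $\phi_{(i,\ell)}^0=1$. At iteration $t$, each agent $i$: - computes $\tilde{\mathbf x}_{(i,\ell_i^t)}^t=\arg\min_{\mathbf z\in\mathcal K_{\ell_i^t}}\hat f_{i,\ell_i^t}(\mathbf z;\mathbf x_{(i,:)}^t,\mathbf y_{(i,\ell_i^t)}^t)+r_{\ell_i^t}(\mathbf z)$; - sets $\Delta\mathbf x_{(i,\ell)}^t=\tilde{\mathbf x}_{(i,\ell)}^t-\mathbf x_{(i,\ell)}^t$ if $\ell=\ell_i^t$ and $\Delta\mathbf x_{(i,\ell)}^t=\mathbf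 0$ otherwise; - for every $\ell$ updates $$\phi_{(i,\ell)}^{t+1}=\sum_{j\in\mathcal N_{i,\ell}^t}a_{ij\ell}^t\phi_{(j,\ell)}^t,\qquad \mathbf x_{(i,\ell)}^{t+1}=\sum_{j\in\mathcal N_{i,\ell}^t}\frac{a_{ij\ell}^t\phi_{(j,\ell)}^t}{\phi_{(i,\ell)}^{t+1}}\big(\mathbf x_{(j,\ell)}^t+\gamma^t\Delta\mathbf x_{(j,\ell)}^t\big),$$ $$\mathbf y_{(i,\ell)}^{t+1}=\sum_{j\in\mathcal N_{i,\ell}^t}\frac{a_{ij\ell}^t}{\phi_{(i,\ell)}^{t+1}}\Big(\phi_{(j,\ell)}^t\mathbf y_{(j,\ell)}^t+\nabla_\ell f_j(\mathbf x_{(j,:)}^{t+1})-\nabla_\ell f_j(\mathbf x_{(j,:)}^t)\Big).$$ *)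

theory Defs
  imports "HOL-Analysis.Analysis"
begin

text \<open>Agents are the elements of a finite type 'n (so N = CARD('n)), blocks are the
elements of a finite type 'b (so B = CARD('b)), and each block lives in real^'d
(so d = CARD('d)).  A full vector in R^(dB) is an element of real^'d^'b, whose
component x $ l is the l-th block.\<close>

definition strongly_convex_on :: "'a::real_normed_vector set \<Rightarrow> ('a \<Rightarrow> real) \<Rightarrow> real \<Rightarrow> bool" where
  "strongly_convex_on S f \<tau> \<longleftrightarrow> convex_on S (\<lambda>z. f z - \<tau> / 2 * (norm z)\<^sup>2)"

definition is_subgradient :: "('a::real_inner \<Rightarrow> real) \<Rightarrow> 'a \<Rightarrow> 'a \<Rightarrow> bool" where
  "is_subgradient r x g \<longleftrightarrow> (\<forall>z. r z \<ge> r x + g \<bullet> (z - x))"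

definition coercive_on :: "'a::real_normed_vector set \<Rightarrow> ('a \<Rightarrow> real) \<Rightarrow> bool" where
  "coercive_on S U \<longleftrightarrow> (\<forall>M. \<exists>R. \<forall>x\<in>S. norm x \<ge> R \<longrightarrow> U x \<ge> M)"

definition prodset :: "('b \<Rightarrow> (real^'d) set) \<Rightarrow> (real^'d^'b) set" where
  "prodset Kb = {x. \<forall>l. x $ l \<in> Kb l}"

definition nbrs :: "('n \<times> 'n) set \<Rightarrow> (nat \<Rightarrow> 'n \<Rightarrow> 'b) \<Rightarrow> nat \<Rightarrow> 'n \<Rightarrow> 'b \<Rightarrow> 'n set" where
  "nbrs E sel t i l = {j. (j, i) \<in> E \<and> sel t j = l} \<union> {i}"

definition edges_blk :: "('n \<times> 'n) set \<Rightarrow> (nat \<Rightarrow> 'n \<Rightarrow> 'b) \<Rightarrow> nat \<Rightarrow> 'b \<Rightarrow> ('n \<times> 'n) set" where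
  "edges_blk E sel t l = {(j, i). (j, i) \<in> E \<and> j \<in> nbrs E sel t i l}"

end

theory Submission
  imports Defs
begin

text \<open>For each block the weight matrices are column stochastic, have diagonal entries above
  \<kappa>, and activate every edge of the strongly connected graph in every window of fixed
  length. Their backward products therefore contract row oscillations geometrically, so a
  push-sum iteration perturbed by inputs \<open>e k\<close> follows the network average of its initial
  values plus all inputs, with error at most a multiple of \<open>\<rho> ^ t + \<Sum>k<t. \<rho> ^ (t - k) * \<bar>e k\<bar>\<close>.

  For the local copies x the inputs are \<gamma>-scaled local steps, which are bounded because the
  surrogate problems are strongly convex with bounded data. A sequence is called negligible if
  it tends to 0 and is summable against \<gamma>; geometric convolution preserves this, so
  consecutive iterates of x differ negligibly, and by Lipschitz continuity so do the gradients
  that drive the tracking variables y. The tracking error is bounded by \<open>\<rho> ^ t\<close> plus the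
  geometric convolution of these gradient increments, hence is negligible, which is the
  claim.\<close>

section \<open>Sequences negligible with respect to the step sizes\<close>

definition negligible_seq :: "(nat \<Rightarrow> real) \<Rightarrow> (nat \<Rightarrow> real) \<Rightarrow> bool" where
  "negligible_seq \<gamma> a \<longleftrightarrow> (\<forall>t. 0 \<le> a t) \<and> a \<longlonglongrightarrow> 0 \<and> summable (\<lambda>t. \<gamma> t * a t)"

definition gconv :: "real \<Rightarrow> (nat \<Rightarrow> real) \<Rightarrow> nat \<Rightarrow> real" where
  "gconv \<rho> b t = (\<Sum>k<t. \<rho> ^ (t - k) * b k)"

lemma gconv_0 [simp]: "gconv \<rho> b 0 = 0"
  by (simp add: gconv_def)

lemma gconv_Suc: "gconv \<rho> b (Suc t) = \<rho> * (gconv \<rho> b t + b t)"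
proof -
  have "(\<Sum>k<t. \<rho> ^ (Suc t - k) * b k) = \<rho> * (\<Sum>k<t. \<rho> ^ (t - k) * b k)"
    by (simp add: sum_distrib_left Suc_diff_le less_imp_le mult.assoc)
  then show ?thesis
    by (simp add: gconv_def algebra_simps)
qed

lemma gconv_nonneg: "0 \<le> \<rho> \<Longrightarrow> (\<And>k. 0 \<le> b k) \<Longrightarrow> 0 \<le> gconv \<rho> b t"
  unfolding gconv_def by (intro sum_nonneg mult_nonneg_nonneg) auto

lemma gconv_mono: "0 \<le> \<rho> \<Longrightarrow> (\<And>k. b k \<le> b' k) \<Longrightarrow> gconv \<rho> b t \<le> gconv \<rho> b' t"
  unfolding gconv_def by (intro sum_mono mult_left_mono) auto

lemma gconv_Suc_le:
  assumes "0 \<le> \<rho>" "\<rho> \<le> 1" "\<And>k. 0 \<le> b k"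
  shows "gconv \<rho> b (Suc t) \<le> gconv \<rho> b t + b t"
  unfolding gconv_Suc using assms by (intro mult_left_le_one_le add_nonneg_nonneg gconv_nonneg) auto

lemma tracked_step_le:
  fixes a S :: "nat \<Rightarrow> 'v::real_normed_vector"
  assumes K: "0 \<le> K" and \<rho>: "0 \<le> \<rho>" "\<rho> \<le> 1" and b: "\<And>t. 0 \<le> b t"
    and track: "\<And>t. norm (a t - S t) \<le> K * (\<rho> ^ t + gconv \<rho> b t)"
    and S_step: "\<And>t. norm (S (Suc t) - S t) \<le> b t"
  shows "norm (a (Suc t) - a t) \<le> (2 * K + 1) * (\<rho> ^ t + gconv \<rho> b t + b t)"
proof -
  define c where "c = \<rho> ^ t + gconv \<rho> b t"
  have c: "0 \<le> c"
    unfolding c_def using \<rho> b by (intro add_nonneg_nonneg gconv_nonneg) auto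
  have "\<rho> ^ Suc t + gconv \<rho> b (Suc t) \<le> c + b t"
    using power_decreasing[of t "Suc t" \<rho>] gconv_Suc_le[of \<rho> b t] \<rho> b by (simp add: c_def)
  then have next_le: "K * (\<rho> ^ Suc t + gconv \<rho> b (Suc t)) \<le> K * (c + b t)"
    using K by (rule mult_left_mono)
  have "norm (a (Suc t) - a t) \<le> norm ((a (Suc t) - S (Suc t)) - (a t - S t)) + norm (S (Suc t) - S t)"
    using norm_triangle_ineq[of "(a (Suc t) - S (Suc t)) - (a t - S t)" "S (Suc t) - S t"] by simp
  also have "\<dots> \<le> norm (a (Suc t) - S (Suc t)) + norm (a t - S t) + norm (S (Suc t) - S t)"
    using norm_triangle_ineq4 by (rule add_right_mono)
  also have "\<dots> \<le> K * (c + b t) + K * (c + b t) + (c + b t)"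
    using track[of "Suc t"] track[of t] S_step[of t] next_le mult_left_mono[of c "c + b t" K] K b[of t] c
    unfolding c_def by linarith
  also have "\<dots> = (2 * K + 1) * (\<rho> ^ t + gconv \<rho> b t + b t)"
    by (simp add: c_def algebra_simps)
  finally show ?thesis .
qed

lemma geometric_step_le:
  fixes \<rho> B :: real
  assumes "0 \<le> \<rho>" "\<rho> < 1" "0 \<le> B"
  shows "\<rho> * (B / (1 - \<rho>) + B) \<le> B / (1 - \<rho>)"
proof -
  have "\<rho> * (B / (1 - \<rho>)) + \<rho> * B \<le> \<rho> * (B / (1 - \<rho>)) + B"
    using assms by (simp add: mult_left_le_one_le)
  also have "\<dots> = B / (1 - \<rho>)"
    using assms by (simp add: field_simps)
  finally show ?thesis
    by (simp add: distrib_left)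
qed

lemma gconv_bounded:
  assumes "0 \<le> \<rho>" "\<rho> < 1" "\<And>k. b k \<le> B" "0 \<le> B"
  shows "gconv \<rho> b t \<le> B / (1 - \<rho>)"
proof (induction t)
  case 0
  then show ?case using assms by simp
next
  case (Suc t)
  have "gconv \<rho> b (Suc t) \<le> \<rho> * (B / (1 - \<rho>) + B)"
    unfolding gconv_Suc using Suc assms by (intro mult_left_mono add_mono) auto
  also have "\<dots> \<le> B / (1 - \<rho>)"
    by (rule geometric_step_le) (use assms in auto)
  finally show ?case .
qed

lemma gconv_tendsto_zero:
  assumes \<rho>: "0 < \<rho>" "\<rho> < 1" and b: "\<And>k. 0 \<le> b k" "b \<longlonglongrightarrow> 0"
  shows "gconv \<rho> b \<longlonglongrightarrow> 0"
  unfolding LIMSEQ_iff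
proof (intro allI impI)
  fix r :: real
  assume "0 < r"
  define \<epsilon> where "\<epsilon> = r * (1 - \<rho>) / 4"
  have \<epsilon>: "0 < \<epsilon>" using \<open>0 < r\<close> \<rho> by (simp add: \<epsilon>_def)
  obtain T where T: "\<And>n. n \<ge> T \<Longrightarrow> b n < \<epsilon>"
    using b \<epsilon> unfolding LIMSEQ_iff by (metis diff_zero real_norm_def abs_of_nonneg)
  \<comment> \<open>after time T the inputs are below \<epsilon>, and the memory of [0, T) decays geometrically\<close>
  have tail: "gconv \<rho> b t \<le> \<rho> ^ (t - T) * gconv \<rho> b T + \<epsilon> / (1 - \<rho>)" if "T \<le> t" for t
    using that
  proof (induction t rule: dec_induct)
    case base
    then show ?case using \<epsilon> \<rho> by simp
  next
    case (step t)
    have "gconv \<rho> b (Suc t) \<le> \<rho> * ((\<rho> ^ (t - T) * gconv \<rho> b T + \<epsilon> / (1 - \<rho>)) + \<epsilon>)"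
      unfolding gconv_Suc using step T[of t] \<rho> by (intro mult_left_mono add_mono) auto
    also have "\<dots> = \<rho> ^ (Suc t - T) * gconv \<rho> b T + \<rho> * (\<epsilon> / (1 - \<rho>) + \<epsilon>)"
      using step(1) by (simp add: Suc_diff_le algebra_simps)
    also have "\<rho> * (\<epsilon> / (1 - \<rho>) + \<epsilon>) \<le> \<epsilon> / (1 - \<rho>)"
      using \<rho> \<epsilon> by (intro geometric_step_le) auto
    finally show ?case by simp
  qed
  have "(\<lambda>n. \<rho> ^ n * gconv \<rho> b T) \<longlonglongrightarrow> 0 * gconv \<rho> b T"
    using \<rho> by (intro tendsto_mult tendsto_const LIMSEQ_power_zero) simp
  then obtain N where N: "\<And>n. n \<ge> N \<Longrightarrow> \<rho> ^ n * gconv \<rho> b T < \<epsilon>"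
    unfolding LIMSEQ_iff using \<epsilon> by (metis diff_zero mult_zero_left real_norm_def abs_less_iff)
  have "norm (gconv \<rho> b n - 0) < r" if "n \<ge> T + N" for n
  proof -
    have "gconv \<rho> b n \<le> \<rho> ^ (n - T) * gconv \<rho> b T + \<epsilon> / (1 - \<rho>)"
      using tail that by auto
    also have "\<dots> < \<epsilon> + \<epsilon> / (1 - \<rho>)"
      using N[of "n - T"] that by auto
    also have "\<dots> \<le> 2 * \<epsilon> / (1 - \<rho>)"
      using \<epsilon> \<rho> by (simp add: le_divide_eq field_simps)
    also have "\<dots> < r"
      using \<open>0 < r\<close> \<rho> by (simp add: \<epsilon>_def field_simps)
    finally show ?thesis
      using gconv_nonneg[of \<rho> b n] b \<rho> by simp
  qed
  then show "\<exists>n0. \<forall>n\<ge>n0. norm (gconv \<rho> b n - 0) < r"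
    by blast
qed

lemma summable_weighted_gconv:
  assumes \<rho>: "0 < \<rho>" "\<rho> < 1" and b: "\<And>k. 0 \<le> b k"
    and \<gamma>: "\<And>t. 0 \<le> \<gamma> t" "\<And>t. \<gamma> (Suc t) \<le> \<gamma> t"
    and sb: "summable (\<lambda>t. \<gamma> t * b t)"
  shows "summable (\<lambda>t. \<gamma> t * gconv \<rho> b t)"
proof -
  define d where "d t = \<gamma> t * gconv \<rho> b t" for t
  define G where "G = (\<Sum>t. \<gamma> t * b t)"
  have d0: "0 \<le> d t" for t
    unfolding d_def using \<gamma> gconv_nonneg[OF _ b] \<rho> by simp
  have G: "(\<Sum>t<n. \<gamma> t * b t) \<le> G" for n
    unfolding G_def by (rule sum_le_suminf[OF sb]) (auto intro: mult_nonneg_nonneg \<gamma> b)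
  \<comment> \<open>monotonicity of \<gamma> makes d satisfy the same damped recursion as gconv\<close>
  have d_Suc: "d (Suc t) \<le> \<rho> * (d t + \<gamma> t * b t)" for t
  proof -
    have "d (Suc t) = \<gamma> (Suc t) * (\<rho> * (gconv \<rho> b t + b t))"
      by (simp add: d_def gconv_Suc)
    also have "\<dots> \<le> \<gamma> t * (\<rho> * (gconv \<rho> b t + b t))"
      using \<gamma> \<rho> gconv_nonneg[of \<rho> b t, OF _ b] b[of t] by (intro mult_right_mono) auto
    finally show ?thesis
      by (simp add: d_def algebra_simps)
  qed
  have partial: "(\<Sum>t<n. d t) \<le> G / (1 - \<rho>)" for n
  proof -
    have "(\<Sum>t<n. d t) \<le> (\<Sum>t<Suc n. d t)"
      using d0 by simp
    also have "\<dots> = d 0 + (\<Sum>t<n. d (Suc t))"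
      by (rule sum.lessThan_Suc_shift)
    also have "\<dots> \<le> 0 + (\<Sum>t<n. \<rho> * (d t + \<gamma> t * b t))"
      using d_Suc by (intro add_mono sum_mono) (auto simp: d_def)
    also have "\<dots> = \<rho> * (\<Sum>t<n. d t) + \<rho> * (\<Sum>t<n. \<gamma> t * b t)"
      by (simp add: sum_distrib_left sum.distrib algebra_simps)
    also have "\<dots> \<le> \<rho> * (\<Sum>t<n. d t) + G"
      using G[of n] \<rho> sum_nonneg[of "{..<n}" "\<lambda>t. \<gamma> t * b t"] \<gamma> b
      by (intro add_left_mono mult_left_le_one_le order_trans[OF _ G[of n]]) (auto intro: mult_nonneg_nonneg)
    finally have "(1 - \<rho>) * (\<Sum>t<n. d t) \<le> G"
      by (simp add: algebra_simps)
    then show ?thesis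
      using \<rho> by (simp add: field_simps)
  qed
  have "summable d"
    by (rule bounded_imp_summable[OF d0, where B="G / (1 - \<rho>)"])
       (metis lessThan_Suc_atMost partial)
  then show ?thesis
    by (simp add: d_def[abs_def])
qed

lemma negligible_seq_le:
  assumes "negligible_seq \<gamma> b" "\<And>t. 0 \<le> a t" "\<And>t. 0 \<le> \<gamma> t" "\<And>t. a t \<le> b t"
  shows "negligible_seq \<gamma> a"
  unfolding negligible_seq_def
proof (intro conjI allI)
  show "0 \<le> a t" for t
    by (rule assms(2))
  show "a \<longlonglongrightarrow> 0"
    by (rule Lim_null_comparison[where g=b]) (use assms in \<open>auto simp: negligible_seq_def\<close>)
  show "summable (\<lambda>t. \<gamma> t * a t)"
    by (rule summable_comparison_test[where g="\<lambda>t. \<gamma> t * b t"])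
       (use assms in \<open>auto intro!: mult_left_mono simp: abs_mult negligible_seq_def\<close>)
qed

lemma negligible_seq_add: "negligible_seq \<gamma> a \<Longrightarrow> negligible_seq \<gamma> b \<Longrightarrow> negligible_seq \<gamma> (\<lambda>t. a t + b t)"
  unfolding negligible_seq_def by (auto intro: tendsto_add_zero simp: distrib_left summable_add)

lemma negligible_seq_cmult: "0 \<le> c \<Longrightarrow> negligible_seq \<gamma> a \<Longrightarrow> negligible_seq \<gamma> (\<lambda>t. c * a t)"
  unfolding negligible_seq_def
  by (auto intro: tendsto_mult_right_zero dest: summable_mult[of _ c] simp: mult.left_commute)

lemma negligible_seq_sum:
  "(\<And>i. i \<in> I \<Longrightarrow> negligible_seq \<gamma> (f i)) \<Longrightarrow> negligible_seq \<gamma> (\<lambda>t. \<Sum>i\<in>I. f i t)"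
proof (induction I rule: infinite_finite_induct)
  case (insert i I)
  then show ?case by (simp add: negligible_seq_add)
qed (simp_all add: negligible_seq_def)

lemma negligible_seq_power:
  assumes "0 < \<rho>" "\<rho> < 1" "\<And>t. 0 \<le> \<gamma> t" "\<And>t. \<gamma> t \<le> 1"
  shows "negligible_seq \<gamma> (\<lambda>t. \<rho> ^ t)"
  unfolding negligible_seq_def
proof (intro conjI allI)
  show "0 \<le> \<rho> ^ t" for t
    using assms by simp
  show "(\<lambda>t. \<rho> ^ t) \<longlonglongrightarrow> 0"
    using assms by (intro LIMSEQ_power_zero) simp
  show "summable (\<lambda>t. \<gamma> t * \<rho> ^ t)"
    by (rule summable_comparison_test[where g="\<lambda>t. \<rho> ^ t"])
       (use assms in \<open>auto intro!: mult_left_le_one_le summable_geometric simp: abs_mult\<close>)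
qed

lemma negligible_seq_gconv:
  assumes "0 < \<rho>" "\<rho> < 1" "\<And>t. 0 \<le> \<gamma> t" "\<And>t. \<gamma> (Suc t) \<le> \<gamma> t" "negligible_seq \<gamma> b"
  shows "negligible_seq \<gamma> (gconv \<rho> b)"
  using assms unfolding negligible_seq_def
  by (auto intro: gconv_nonneg gconv_tendsto_zero summable_weighted_gconv)

lemma negligible_seq_step_sizes:
  assumes "\<And>t. 0 \<le> \<gamma> t" "summable (\<lambda>t. (\<gamma> t)\<^sup>2)"
  shows "negligible_seq \<gamma> \<gamma>"
  unfolding negligible_seq_def
proof (intro conjI allI)
  have "(\<lambda>t. sqrt ((\<gamma> t)\<^sup>2)) \<longlonglongrightarrow> sqrt 0"
    by (intro tendsto_real_sqrt summable_LIMSEQ_zero assms(2))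
  then show "\<gamma> \<longlonglongrightarrow> 0"
    using assms(1) by simp
  show "summable (\<lambda>t. \<gamma> t * \<gamma> t)"
    using assms(2) by (simp add: power2_eq_square)
qed (rule assms(1))

section \<open>Products of column-stochastic matrices\<close>

lemma convex_comb_bounds:
  fixes R Q :: "'n::finite \<Rightarrow> real"
  assumes "\<And>m. 0 \<le> Q m" "(\<Sum>m\<in>UNIV. Q m) = 1"
  shows "Min (range R) \<le> (\<Sum>m\<in>UNIV. R m * Q m)" "(\<Sum>m\<in>UNIV. R m * Q m) \<le> Max (range R)"
proof -
  have "(\<Sum>m\<in>UNIV. Min (range R) * Q m) \<le> (\<Sum>m\<in>UNIV. R m * Q m)"
    by (rule sum_mono) (simp add: assms mult_right_mono)
  then show "Min (range R) \<le> (\<Sum>m\<in>UNIV. R m * Q m)"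
    by (simp add: sum_distrib_left[symmetric] assms)
  have "(\<Sum>m\<in>UNIV. R m * Q m) \<le> (\<Sum>m\<in>UNIV. Max (range R) * Q m)"
    by (rule sum_mono) (simp add: assms mult_right_mono)
  then show "(\<Sum>m\<in>UNIV. R m * Q m) \<le> Max (range R)"
    by (simp add: sum_distrib_left[symmetric] assms)
qed

text \<open>Two convex combinations whose weights are all at least \<eta> share the mass \<eta> at every
  point, so only the remaining mass 1 - N\<eta> can separate them.\<close>

lemma convex_comb_diff_le:
  fixes R Q Q' :: "'n::finite \<Rightarrow> real"
  assumes Q: "\<And>m. \<eta> \<le> Q m" "(\<Sum>m\<in>UNIV. Q m) = 1"
    and Q': "\<And>m. \<eta> \<le> Q' m" "(\<Sum>m\<in>UNIV. Q' m) = 1"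
  shows "(\<Sum>m\<in>UNIV. R m * Q m) - (\<Sum>m\<in>UNIV. R m * Q' m)
     \<le> (1 - real CARD('n) * \<eta>) * (Max (range R) - Min (range R))"
proof -
  have shift: "(\<Sum>m\<in>UNIV. R m * P m) = (\<Sum>m\<in>UNIV. R m * (P m - \<eta>)) + \<eta> * (\<Sum>m\<in>UNIV. R m)"
    for P :: "'n \<Rightarrow> real"
    by (simp add: algebra_simps sum.distrib sum_subtractf sum_distrib_left)
  have rest: "(\<Sum>m\<in>UNIV. P m - \<eta>) = 1 - real CARD('n) * \<eta>"
    if "(\<Sum>m\<in>UNIV. P m) = 1" for P :: "'n \<Rightarrow> real"
    using that by (simp add: sum_subtractf)
  have "(\<Sum>m\<in>UNIV. R m * (Q m - \<eta>)) \<le> (\<Sum>m\<in>UNIV. Max (range R) * (Q m - \<eta>))"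
    by (rule sum_mono) (simp add: Q mult_right_mono)
  also have "\<dots> = Max (range R) * (1 - real CARD('n) * \<eta>)"
    by (simp add: sum_distrib_left[symmetric] rest Q)
  finally have upper: "(\<Sum>m\<in>UNIV. R m * (Q m - \<eta>)) \<le> Max (range R) * (1 - real CARD('n) * \<eta>)" .
  have "Min (range R) * (1 - real CARD('n) * \<eta>) = (\<Sum>m\<in>UNIV. Min (range R) * (Q' m - \<eta>))"
    by (simp add: sum_distrib_left[symmetric] rest Q')
  also have "\<dots> \<le> (\<Sum>m\<in>UNIV. R m * (Q' m - \<eta>))"
    by (rule sum_mono) (simp add: Q' mult_right_mono)
  finally have lower: "Min (range R) * (1 - real CARD('n) * \<eta>) \<le> (\<Sum>m\<in>UNIV. R m * (Q' m - \<eta>))" .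
  show ?thesis
    unfolding shift[of Q] shift[of Q'] using upper lower by (simp add: algebra_simps)
qed

lemma sum_scaleR_sum_swap:
  fixes v :: "'m \<Rightarrow> 'v::real_vector"
  assumes "finite J" "finite K"
  shows "(\<Sum>j\<in>J. a j *\<^sub>R (\<Sum>m\<in>K. b j m *\<^sub>R v m)) = (\<Sum>m\<in>K. (\<Sum>j\<in>J. a j * b j m) *\<^sub>R v m)"
  by (simp add: scaleR_sum_right scaleR_sum_left sum.swap[of _ J K])

locale column_stochastic =
  fixes M :: "nat \<Rightarrow> 'n::finite \<Rightarrow> 'n \<Rightarrow> real"
  assumes nonneg: "\<And>t i j. 0 \<le> M t i j"
    and colsum: "\<And>t j. (\<Sum>i\<in>UNIV. M t i j) = 1"
begin

fun mprod :: "nat \<Rightarrow> nat \<Rightarrow> 'n \<Rightarrow> 'n \<Rightarrow> real" where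
  "mprod s 0 = (\<lambda>i j. if i = j then 1 else 0)"
| "mprod s (Suc k) = (\<lambda>i j. \<Sum>m\<in>UNIV. M (s + k) i m * mprod s k m j)"

lemma mprod_nonneg: "0 \<le> mprod s k i j"
  by (induction k arbitrary: i j) (auto intro!: sum_nonneg mult_nonneg_nonneg nonneg)

lemma mprod_colsum: "(\<Sum>i\<in>UNIV. mprod s k i j) = 1"
proof (induction k arbitrary: j)
  case (Suc k)
  have "(\<Sum>i\<in>UNIV. mprod s (Suc k) i j) = (\<Sum>i\<in>UNIV. \<Sum>m\<in>UNIV. M (s + k) i m * mprod s k m j)"
    by simp
  also have "\<dots> = (\<Sum>m\<in>UNIV. (\<Sum>i\<in>UNIV. M (s + k) i m) * mprod s k m j)"
    by (subst sum.swap) (simp add: sum_distrib_right)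
  also have "\<dots> = 1"
    using Suc by (simp add: colsum)
  finally show ?case .
qed simp

lemma mprod_le_1: "mprod s k i j \<le> 1"
proof -
  have "mprod s k i j \<le> (\<Sum>i\<in>UNIV. mprod s k i j)"
    by (rule member_le_sum) (auto simp: mprod_nonneg)
  then show ?thesis
    by (simp add: mprod_colsum)
qed

lemma mprod_add: "mprod s (a + b) i j = (\<Sum>m\<in>UNIV. mprod (s + a) b i m * mprod s a m j)"
proof (induction b arbitrary: i j)
  case 0
  have "(\<Sum>m\<in>UNIV. mprod (s + a) 0 i m * mprod s a m j) = (\<Sum>m\<in>UNIV. if i = m then mprod s a m j else 0)"
    by (rule sum.cong) auto
  then show ?case
    by simp
next
  case (Suc b)
  have "mprod s (a + Suc b) i j
      = (\<Sum>m'\<in>UNIV. M (s + a + b) i m' * (\<Sum>m\<in>UNIV. mprod (s + a) b m' m * mprod s a m j))"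
    using Suc by (simp add: add.assoc)
  also have "\<dots> = (\<Sum>m'\<in>UNIV. \<Sum>m\<in>UNIV. M (s + a + b) i m' * mprod (s + a) b m' m * mprod s a m j)"
    by (simp add: sum_distrib_left mult.assoc)
  also have "\<dots> = (\<Sum>m\<in>UNIV. (\<Sum>m'\<in>UNIV. M (s + a + b) i m' * mprod (s + a) b m' m) * mprod s a m j)"
    by (subst sum.swap) (simp add: sum_distrib_right)
  finally show ?case
    by simp
qed

lemma mprod_add_ge: "mprod (s + a) b i m * mprod s a m j \<le> mprod s (a + b) i j"
  unfolding mprod_add
  by (rule member_le_sum[where f="\<lambda>m. mprod (s + a) b i m * mprod s a m j"])
     (auto intro: mult_nonneg_nonneg mprod_nonneg)

lemma mprod_Suc_diff:
  assumes "k \<le> t"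
  shows "mprod k (Suc t - k) i m = (\<Sum>j\<in>UNIV. M t i j * mprod k (t - k) j m)"
  using assms by (simp add: Suc_diff_le)

lemma mprod_one: "mprod t (Suc t - t) i m = M t i m"
proof -
  have "mprod t (Suc t - t) i m = (\<Sum>j\<in>UNIV. M t i j * (if j = m then 1 else 0))"
    by simp
  also have "\<dots> = (\<Sum>j\<in>UNIV. if j = m then M t i j else 0)"
    by (rule sum.cong) auto
  finally have "mprod t (Suc t - t) i m = (\<Sum>j\<in>UNIV. if j = m then M t i j else 0)" .
  then show ?thesis
    by simp
qed

definition osc :: "nat \<Rightarrow> nat \<Rightarrow> 'n \<Rightarrow> real" where
  "osc s k i = Max (range (mprod s k i)) - Min (range (mprod s k i))"

lemma osc_le_1: "osc s k i \<le> 1"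
proof -
  have "Max (range (mprod s k i)) \<le> 1" "0 \<le> Min (range (mprod s k i))"
    by (auto simp: mprod_le_1 mprod_nonneg)
  then show ?thesis
    unfolding osc_def by linarith
qed

lemma mprod_between_row:
  "Min (range (mprod (s + a) b i)) \<le> mprod s (a + b) i j"
  "mprod s (a + b) i j \<le> Max (range (mprod (s + a) b i))"
  unfolding mprod_add by (rule convex_comb_bounds[OF mprod_nonneg mprod_colsum])+

definition weight :: "nat \<Rightarrow> 'n \<Rightarrow> real" where
  "weight t i = (\<Sum>j\<in>UNIV. mprod 0 t i j)"

lemma weight_unique:
  assumes "\<And>t i. p (Suc t) i = (\<Sum>j\<in>UNIV. M t i j * p t j)" "\<And>i. p 0 i = 1"
  shows "p t i = weight t i"
proof (induction t arbitrary: i)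
  case (Suc t)
  have "p (Suc t) i = (\<Sum>m\<in>UNIV. \<Sum>j\<in>UNIV. M t i m * mprod 0 t m j)"
    by (simp add: assms(1) Suc weight_def sum_distrib_left)
  also have "\<dots> = weight (Suc t) i"
    by (subst sum.swap) (simp add: weight_def)
  finally show ?case .
qed (simp add: assms(2) weight_def)

lemma perturbed_expansion:
  fixes u e :: "nat \<Rightarrow> 'n \<Rightarrow> 'v::real_vector"
  assumes rec: "\<And>t i. u (Suc t) i = (\<Sum>j\<in>UNIV. M t i j *\<^sub>R (u t j + e t j))"
  shows "u t i = (\<Sum>j\<in>UNIV. mprod 0 t i j *\<^sub>R u 0 j) + (\<Sum>k<t. \<Sum>j\<in>UNIV. mprod k (t - k) i j *\<^sub>R e k j)"
proof (induction t arbitrary: i)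
  case 0
  have "(\<Sum>j\<in>UNIV. mprod 0 0 i j *\<^sub>R u 0 j) = (\<Sum>j\<in>UNIV. if j = i then u 0 j else 0)"
    by (rule sum.cong) auto
  then show ?case
    by simp
next
  case (Suc t)
  have "u (Suc t) i = (\<Sum>j\<in>UNIV. M t i j *\<^sub>R (\<Sum>m\<in>UNIV. mprod 0 t j m *\<^sub>R u 0 m))
      + (\<Sum>k<t. \<Sum>j\<in>UNIV. M t i j *\<^sub>R (\<Sum>m\<in>UNIV. mprod k (t - k) j m *\<^sub>R e k m))
      + (\<Sum>j\<in>UNIV. M t i j *\<^sub>R e t j)"
    by (simp add: rec Suc.IH scaleR_add_right sum.distrib scaleR_sum_right sum.swap[of _ UNIV "{..<t}"])
  also have "(\<Sum>j\<in>UNIV. M t i j *\<^sub>R (\<Sum>m\<in>UNIV. mprod 0 t j m *\<^sub>R u 0 m))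
      = (\<Sum>m\<in>UNIV. mprod 0 (Suc t) i m *\<^sub>R u 0 m)"
    by (simp add: sum_scaleR_sum_swap)
  also have "(\<Sum>k<t. \<Sum>j\<in>UNIV. M t i j *\<^sub>R (\<Sum>m\<in>UNIV. mprod k (t - k) j m *\<^sub>R e k m))
      = (\<Sum>k<t. \<Sum>m\<in>UNIV. mprod k (Suc t - k) i m *\<^sub>R e k m)"
    by (rule sum.cong) (auto simp: sum_scaleR_sum_swap mprod_Suc_diff)
  also have "(\<Sum>j\<in>UNIV. M t i j *\<^sub>R e t j) = (\<Sum>m\<in>UNIV. mprod t (Suc t - t) i m *\<^sub>R e t m)"
    by (simp only: mprod_one)
  finally show ?case
    by (simp add: add.assoc)
qed

end

lemma norm_sum_scaleR_le:
  fixes v :: "'i \<Rightarrow> 'v::real_normed_vector"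
  assumes "\<And>j. j \<in> J \<Longrightarrow> \<bar>a j\<bar> \<le> B"
  shows "norm (\<Sum>j\<in>J. a j *\<^sub>R v j) \<le> B * (\<Sum>j\<in>J. norm (v j))"
proof -
  have "norm (\<Sum>j\<in>J. a j *\<^sub>R v j) \<le> (\<Sum>j\<in>J. \<bar>a j\<bar> * norm (v j))"
    by (rule order_trans[OF norm_sum]) simp
  also have "\<dots> \<le> (\<Sum>j\<in>J. B * norm (v j))"
    using assms by (intro sum_mono mult_right_mono) auto
  finally show ?thesis
    by (simp add: sum_distrib_left)
qed

locale uniformly_connected = column_stochastic M for M :: "nat \<Rightarrow> 'n::finite \<Rightarrow> 'n \<Rightarrow> real" +
  fixes E :: "('n \<times> 'n) set" and \<kappa>0 :: real and T :: nat
  assumes diag_pos: "0 < \<kappa>0"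
    and diag: "\<And>t i. \<kappa>0 \<le> M t i i"
    and T_pos: "0 < T"
    and edge_active: "\<And>i j s. (j, i) \<in> E \<Longrightarrow> \<exists>\<tau>. s \<le> \<tau> \<and> \<tau> < s + T \<and> \<kappa>0 \<le> M \<tau> i j"
    and strongly_connected: "\<And>i j. (j, i) \<in> E\<^sup>*"
begin

lemma diag_le_1: "\<kappa>0 \<le> 1"
proof -
  fix i :: 'n
  have "M 0 i i \<le> (\<Sum>i'\<in>UNIV. M 0 i' i)"
    by (rule member_le_sum) (auto simp: nonneg)
  then show ?thesis
    using diag[of 0 i] by (simp add: colsum)
qed

lemma mprod_diag_ge: "\<kappa>0 ^ k \<le> mprod s k i i"
proof (induction k)
  case (Suc k)
  have "\<kappa>0 * \<kappa>0 ^ k \<le> M (s + k) i i * mprod s k i i"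
    using Suc diag diag_pos nonneg by (intro mult_mono) auto
  also have "\<dots> \<le> mprod s (Suc k) i i"
    by simp (rule member_le_sum[where f="\<lambda>m. M (s + k) i m * mprod s k m i"],
             auto intro: mult_nonneg_nonneg nonneg mprod_nonneg)
  finally show ?case
    by simp
qed simp

lemma mprod_edge_ge:
  assumes "(j, i) \<in> E"
  shows "\<kappa>0 ^ T \<le> mprod s T i j"
proof -
  obtain \<tau> where \<tau>: "s \<le> \<tau>" "\<tau> < s + T" "\<kappa>0 \<le> M \<tau> i j"
    using edge_active[OF assms] by blast
  define d where "d = \<tau> - s"
  define e where "e = T - Suc d"
  have T_eq: "T = Suc d + e"
    using \<tau> by (simp add: d_def e_def)
  \<comment> \<open>wait at j for d steps, cross the edge at time \<tau>, then wait at i for e steps\<close>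
  have "\<kappa>0 * \<kappa>0 ^ d \<le> M (s + d) i j * mprod s d j j"
    using \<tau> mprod_diag_ge[of d s j] diag_pos by (intro mult_mono) (auto simp: d_def)
  also have "\<dots> \<le> mprod s (Suc d) i j"
    by simp (rule member_le_sum[where f="\<lambda>m. M (s + d) i m * mprod s d m j"],
             auto intro: mult_nonneg_nonneg mprod_nonneg nonneg)
  finally have crossed: "\<kappa>0 * \<kappa>0 ^ d \<le> mprod s (Suc d) i j" .
  have "\<kappa>0 ^ T = \<kappa>0 ^ e * (\<kappa>0 * \<kappa>0 ^ d)"
    using T_eq by (simp add: power_add)
  also have "\<dots> \<le> mprod (s + Suc d) e i i * mprod s (Suc d) i j"
    using crossed mprod_diag_ge[of e "s + Suc d" i] diag_pos
    by (intro mult_mono) (auto intro: mprod_nonneg)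
  also have "\<dots> \<le> mprod s T i j"
    unfolding T_eq by (rule mprod_add_ge)
  finally show ?thesis .
qed

lemma mprod_path_ge: "(j, i) \<in> E ^^ n \<Longrightarrow> \<kappa>0 ^ (n * T + k) \<le> mprod s (n * T + k) i j"
proof (induction n arbitrary: i k)
  case 0
  then show ?case
    using mprod_diag_ge by simp
next
  case (Suc n)
  from Suc.prems obtain a where a: "(j, a) \<in> E ^^ n" "(a, i) \<in> E"
    by (auto elim: relpow_Suc_E)
  have "\<kappa>0 ^ k * \<kappa>0 ^ T \<le> mprod (s + n * T + T) k i i * mprod (s + n * T) T i a"
    using mprod_diag_ge[of k _ i] mprod_edge_ge[OF a(2)] diag_pos
    by (intro mult_mono) (auto intro: mprod_nonneg)
  also have "\<dots> \<le> mprod (s + n * T) (T + k) i a"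
    by (rule mprod_add_ge)
  finally have last_hop: "\<kappa>0 ^ k * \<kappa>0 ^ T \<le> mprod (s + n * T) (T + k) i a" .
  have "\<kappa>0 ^ (Suc n * T + k) = \<kappa>0 ^ k * \<kappa>0 ^ T * \<kappa>0 ^ (n * T + 0)"
    by (simp add: power_add algebra_simps)
  also have "\<dots> \<le> mprod (s + n * T) (T + k) i a * mprod s (n * T) a j"
    using last_hop Suc.IH[OF a(1), of 0] diag_pos by (intro mult_mono) (auto intro: mprod_nonneg)
  also have "\<dots> \<le> mprod s (n * T + (T + k)) i j"
    by (rule mprod_add_ge)
  finally show ?case
    by (simp add: algebra_simps)
qed

definition hops :: "'n \<Rightarrow> 'n \<Rightarrow> nat" where
  "hops i j = (SOME n. (j, i) \<in> E ^^ n)"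

definition W :: nat where
  "W = Suc (Max (range (\<lambda>(i, j). hops i j))) * T"

definition \<eta> :: real where
  "\<eta> = \<kappa>0 ^ W"

definition q :: real where
  "q = 1 - real CARD('n) * \<eta>"

lemma W_pos: "0 < W"
  using T_pos by (simp add: W_def)

lemma \<eta>_pos: "0 < \<eta>"
  using diag_pos by (simp add: \<eta>_def)

lemma mprod_window_ge: "\<eta> \<le> mprod s W i j"
proof -
  have path: "(j, i) \<in> E ^^ hops i j"
    unfolding hops_def using strongly_connected[of j i] by (metis rtrancl_power someI_ex)
  have "hops i j \<le> Max (range (\<lambda>(i, j). hops i j))"
    by (rule Max_ge) (auto intro: image_eqI[where x="(i, j)"])
  then have "hops i j * T \<le> W"
    unfolding W_def by (intro mult_le_mono1) simp
  then obtain k where "W = hops i j * T + k"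
    using le_Suc_ex by blast
  then show ?thesis
    using mprod_path_ge[OF path, of k s] by (simp add: \<eta>_def)
qed

lemma mprod_ge_\<eta>:
  assumes "W \<le> k"
  shows "\<eta> \<le> mprod s k i j"
proof -
  have "\<eta> = (\<Sum>m\<in>UNIV. \<eta> * mprod s (k - W) m j)"
    by (simp add: sum_distrib_left[symmetric] mprod_colsum)
  also have "\<dots> \<le> (\<Sum>m\<in>UNIV. mprod (s + (k - W)) W i m * mprod s (k - W) m j)"
    by (intro sum_mono mult_right_mono mprod_window_ge mprod_nonneg)
  also have "\<dots> = mprod s k i j"
    using assms mprod_add[of s "k - W" W i j] by simp
  finally show ?thesis .
qed

lemma q_bounds: "0 \<le> q" "q < 1"
proof -
  have "(\<Sum>i\<in>(UNIV::'n set). \<eta>) \<le> (\<Sum>i\<in>UNIV. mprod 0 W i (undefined::'n))"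
    by (rule sum_mono) (rule mprod_window_ge)
  then show "0 \<le> q"
    by (simp add: q_def mprod_colsum)
  show "q < 1"
    using \<eta>_pos by (simp add: q_def)
qed

lemma osc_contract: "osc s (W + a) i \<le> q * osc (s + W) a i"
proof -
  let ?X = "mprod s (W + a) i"
  have "Max (range ?X) \<in> range ?X" "Min (range ?X) \<in> range ?X"
    by (auto intro: Max_in Min_in)
  then obtain j1 j2 where j1: "Max (range ?X) = ?X j1" and j2: "Min (range ?X) = ?X j2"
    by blast
  have "?X j1 - ?X j2 \<le> q * (Max (range (mprod (s + W) a i)) - Min (range (mprod (s + W) a i)))"
    unfolding mprod_add q_def
    by (rule convex_comb_diff_le) (auto intro: mprod_window_ge simp: mprod_colsum)
  then show ?thesis
    by (simp add: osc_def j1 j2)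
qed

lemma osc_decay: "osc s (m * W + a) i \<le> q ^ m"
proof (induction m arbitrary: s)
  case 0
  then show ?case
    using osc_le_1 by simp
next
  case (Suc m)
  have "osc s (Suc m * W + a) i = osc s (W + (m * W + a)) i"
    by (simp add: add.assoc)
  also have "\<dots> \<le> q * osc (s + W) (m * W + a) i"
    by (rule osc_contract)
  also have "\<dots> \<le> q * q ^ m"
    using Suc.IH q_bounds by (intro mult_left_mono) auto
  finally show ?case
    by simp
qed

text \<open>The maximum with 1/2 only keeps \<open>rate\<close> positive when \<open>q = 0\<close>.\<close>

definition rate :: real where
  "rate = root W (max q (1 / 2))"

definition gain :: real where
  "gain = 1 / max q (1 / 2)"

lemma rate_bounds: "0 < rate" "rate < 1"
  using q_bounds W_pos by (auto simp: rate_def real_root_lt_1_iff)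

lemma gain_pos: "0 < gain"
  by (simp add: gain_def)

lemma q_power_le: "q ^ (n div W) \<le> gain * rate ^ n"
proof -
  define q' where "q' = max q (1 / 2)"
  have q': "0 < q'" "q \<le> q'" "rate ^ W = q'"
    using q_bounds W_pos by (auto simp: q'_def rate_def real_root_pow_pos2)
  have "n = W * (n div W) + n mod W"
    by simp
  then have "n \<le> W * (n div W) + W"
    using mod_less_divisor[OF W_pos, of n] by linarith
  then have "rate ^ (W * (n div W) + W) \<le> rate ^ n"
    using rate_bounds by (intro power_decreasing) auto
  then have "rate ^ (W * (n div W)) \<le> rate ^ n / q'"
    using q' by (simp add: power_add pos_le_divide_eq)
  moreover have "q ^ (n div W) \<le> rate ^ (W * (n div W))"
    unfolding power_mult q' using q_bounds q' by (intro power_mono) auto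
  ultimately show ?thesis
    by (simp add: gain_def q'_def)
qed

lemma weight_ge: "\<eta> \<le> weight t i"
proof -
  have "\<eta> \<le> mprod 0 t i i"
  proof (cases "W \<le> t")
    case True
    then show ?thesis
      by (rule mprod_ge_\<eta>)
  next
    case False
    then have "\<kappa>0 ^ W \<le> \<kappa>0 ^ t"
      using diag_pos diag_le_1 by (intro power_decreasing) auto
    then show ?thesis
      using mprod_diag_ge[of t 0 i] by (simp add: \<eta>_def)
  qed
  also have "\<dots> \<le> weight t i"
    unfolding weight_def by (rule member_le_sum) (auto intro: mprod_nonneg)
  finally show ?thesis .
qed

lemma mprod_near_weight:
  assumes "k \<le> t"
  shows "\<bar>mprod k (t - k) i j - weight t i / real CARD('n)\<bar> \<le> gain * rate ^ (t - k)"
proof -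
  have near: "\<bar>mprod k (t - k) i j - mprod 0 t i j'\<bar> \<le> gain * rate ^ (t - k)" for j'
  proof -
    have "Min (range (mprod k (t - k) i)) \<le> mprod 0 t i j'"
      "mprod 0 t i j' \<le> Max (range (mprod k (t - k) i))"
      using mprod_between_row[of 0 k "t - k" i j'] assms by simp_all
    moreover have "Min (range (mprod k (t - k) i)) \<le> mprod k (t - k) i j"
      "mprod k (t - k) i j \<le> Max (range (mprod k (t - k) i))"
      by auto
    moreover have "osc k (t - k) i \<le> gain * rate ^ (t - k)"
      using osc_decay[of k "(t - k) div W" "(t - k) mod W" i] q_power_le[of "t - k"]
      by (simp add: mult.commute)
    ultimately show ?thesis
      unfolding osc_def by linarith
  qed
  have "mprod k (t - k) i j - weight t i / real CARD('n)
      = (\<Sum>j'\<in>UNIV. mprod k (t - k) i j - mprod 0 t i j') / real CARD('n)"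
    by (simp add: weight_def sum_subtractf field_simps)
  also have "\<bar>\<dots>\<bar> \<le> (\<Sum>j'\<in>UNIV. \<bar>mprod k (t - k) i j - mprod 0 t i j'\<bar>) / real CARD('n)"
    unfolding abs_divide abs_of_nat by (intro divide_right_mono sum_abs) simp
  also have "\<dots> \<le> (\<Sum>j'\<in>(UNIV::'n set). gain * rate ^ (t - k)) / real CARD('n)"
    using near by (intro divide_right_mono sum_mono) auto
  also have "\<dots> = gain * rate ^ (t - k)"
    by simp
  finally show ?thesis .
qed

text \<open>The perturbed iteration keeps track of its total mass: dividing by the weight of the
  unperturbed iteration recovers the network average of the initial values plus all perturbations,
  up to a geometrically damped error.\<close>

lemma perturbed_consensus_bound:
  fixes u e :: "nat \<Rightarrow> 'n \<Rightarrow> 'v::real_normed_vector"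
  assumes rec: "\<And>t i. u (Suc t) i = (\<Sum>j\<in>UNIV. M t i j *\<^sub>R (u t j + e t j))"
  shows "norm ((1 / weight t i) *\<^sub>R u t i
            - (1 / real CARD('n)) *\<^sub>R ((\<Sum>j\<in>UNIV. u 0 j) + (\<Sum>k<t. \<Sum>j\<in>UNIV. e k j)))
         \<le> gain / \<eta> * (rate ^ t * (\<Sum>j\<in>UNIV. norm (u 0 j))
                         + gconv rate (\<lambda>k. \<Sum>j\<in>UNIV. norm (e k j)) t)"
proof -
  define c where "c = weight t i / real CARD('n)"
  define S where "S = (\<Sum>j\<in>UNIV. u 0 j) + (\<Sum>k<t. \<Sum>j\<in>UNIV. e k j)"
  define B where "B = rate ^ t * (\<Sum>j\<in>UNIV. norm (u 0 j)) + gconv rate (\<lambda>k. \<Sum>j\<in>UNIV. norm (e k j)) t"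
  have B_nonneg: "0 \<le> B"
    unfolding B_def using rate_bounds by (intro add_nonneg_nonneg mult_nonneg_nonneg gconv_nonneg sum_nonneg) auto
  have w: "0 < weight t i"
    using weight_ge \<eta>_pos by (rule order.strict_trans2[rotated])
  have "u t i - c *\<^sub>R S
      = (\<Sum>j\<in>UNIV. (mprod 0 t i j - c) *\<^sub>R u 0 j)
        + (\<Sum>k<t. \<Sum>j\<in>UNIV. (mprod k (t - k) i j - c) *\<^sub>R e k j)"
    unfolding perturbed_expansion[OF rec, of t i] S_def scaleR_add_right scaleR_sum_right add_diff_add
      scaleR_diff_left sum_subtractf by (rule refl)
  also have "norm \<dots> \<le> gain * rate ^ t * (\<Sum>j\<in>UNIV. norm (u 0 j))
      + (\<Sum>k<t. gain * rate ^ (t - k) * (\<Sum>j\<in>UNIV. norm (e k j)))"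
  proof (rule norm_triangle_mono)
    show "norm (\<Sum>j\<in>UNIV. (mprod 0 t i j - c) *\<^sub>R u 0 j) \<le> gain * rate ^ t * (\<Sum>j\<in>UNIV. norm (u 0 j))"
      by (rule norm_sum_scaleR_le) (use mprod_near_weight[of 0 t i] in \<open>simp add: c_def\<close>)
    show "norm (\<Sum>k<t. \<Sum>j\<in>UNIV. (mprod k (t - k) i j - c) *\<^sub>R e k j)
        \<le> (\<Sum>k<t. gain * rate ^ (t - k) * (\<Sum>j\<in>UNIV. norm (e k j)))"
      by (rule order_trans[OF norm_sum], rule sum_mono, rule norm_sum_scaleR_le)
         (use mprod_near_weight in \<open>simp add: c_def\<close>)
  qed
  also have "\<dots> = gain * B"
    unfolding B_def gconv_def by (simp add: sum_distrib_left mult.assoc distrib_left)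
  finally have bound: "norm (u t i - c *\<^sub>R S) \<le> gain * B" .
  have "(1 / weight t i) *\<^sub>R u t i - (1 / real CARD('n)) *\<^sub>R S = (1 / weight t i) *\<^sub>R (u t i - c *\<^sub>R S)"
    using w by (simp add: c_def scaleR_diff_right)
  then have "norm ((1 / weight t i) *\<^sub>R u t i - (1 / real CARD('n)) *\<^sub>R S) = norm (u t i - c *\<^sub>R S) / weight t i"
    using w by simp
  also have "\<dots> \<le> gain * B / \<eta>"
    using bound w weight_ge \<eta>_pos gain_pos B_nonneg by (intro frac_le) auto
  finally show ?thesis
    by (simp add: S_def B_def)
qed
end

section \<open>Convex analysis\<close>

lemma power2_norm_convex_comb:
  fixes x y :: "'a::real_inner"
  assumes "u + v = 1"
  shows "(norm (u *\<^sub>R x + v *\<^sub>R y))\<^sup>2 = u * (norm x)\<^sup>2 + v * (norm y)\<^sup>2 - u * v * (norm (x - y))\<^sup>2"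
proof -
  have v: "v = 1 - u"
    using assms by simp
  show ?thesis
    unfolding v power2_norm_eq_inner
    by (simp add: inner_add_left inner_add_right inner_diff_left inner_diff_right algebra_simps inner_commute)
qed

lemma strongly_convex_onD:
  fixes f :: "'a::real_inner \<Rightarrow> real"
  assumes "strongly_convex_on S f \<tau>" "x \<in> S" "y \<in> S" "0 \<le> u" "0 \<le> v" "u + v = 1"
  shows "f (u *\<^sub>R x + v *\<^sub>R y) \<le> u * f x + v * f y - \<tau> / 2 * (u * v * (norm (x - y))\<^sup>2)"
proof -
  have "f (u *\<^sub>R x + v *\<^sub>R y) - \<tau> / 2 * (norm (u *\<^sub>R x + v *\<^sub>R y))\<^sup>2
      \<le> u * (f x - \<tau> / 2 * (norm x)\<^sup>2) + v * (f y - \<tau> / 2 * (norm y)\<^sup>2)"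
    using assms unfolding strongly_convex_on_def convex_on_def by blast
  then show ?thesis
    unfolding power2_norm_convex_comb[OF assms(6)] by (simp add: algebra_simps)
qed

lemma strongly_convex_on_imp_convex:
  assumes "strongly_convex_on S f \<tau>"
  shows "convex S"
  using assms unfolding strongly_convex_on_def convex_on_def by blast

lemma strongly_convex_on_imp_convex_on:
  fixes f :: "'a::real_inner \<Rightarrow> real"
  assumes sc: "strongly_convex_on S f \<tau>" and "0 \<le> \<tau>"
  shows "convex_on S f"
proof (rule convex_onI)
  fix t :: real and x y
  assume "0 < t" "t < 1" "x \<in> S" "y \<in> S"
  moreover have "0 \<le> \<tau> / 2 * ((1 - t) * t * (norm (x - y))\<^sup>2)"
    using \<open>0 \<le> \<tau>\<close> \<open>0 < t\<close> \<open>t < 1\<close> by simp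
  ultimately show "f ((1 - t) *\<^sub>R x + t *\<^sub>R y) \<le> (1 - t) * f x + t * f y"
    using strongly_convex_onD[OF sc, of x y "1 - t" t] by simp
qed (rule strongly_convex_on_imp_convex[OF sc])

lemma convex_on_gradient_ineq:
  fixes f :: "'a::real_inner \<Rightarrow> real"
  assumes cv: "convex_on S f" and x: "x \<in> S" and y: "y \<in> S"
    and d: "(f has_derivative (\<lambda>h. g \<bullet> h)) (at x)"
  shows "f x + g \<bullet> (y - x) \<le> f y"
proof -
  let ?v = "y - x"
  have "((\<lambda>s::real. x + s *\<^sub>R ?v) has_derivative (\<lambda>s. s *\<^sub>R ?v)) (at 0)"
    by (auto intro!: derivative_eq_intros)
  moreover have "(f has_derivative (\<lambda>h. g \<bullet> h)) (at (x + 0 *\<^sub>R ?v))"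
    using d by simp
  ultimately have "((\<lambda>s::real. f (x + s *\<^sub>R ?v)) has_derivative (\<lambda>s. g \<bullet> (s *\<^sub>R ?v))) (at 0)"
    by (rule has_derivative_compose)
  moreover have "(\<lambda>s. g \<bullet> (s *\<^sub>R ?v)) = (*) (g \<bullet> ?v)"
    by (auto simp: inner_scaleR_right)
  ultimately have "((\<lambda>s::real. f (x + s *\<^sub>R ?v)) has_field_derivative (g \<bullet> ?v)) (at 0)"
    unfolding has_field_derivative_def by simp
  then have "((\<lambda>s. (f (x + s *\<^sub>R ?v) - f x) / s) \<longlongrightarrow> g \<bullet> ?v) (at 0)"
    unfolding has_field_derivative_iff by simp
  then have lim: "((\<lambda>s. (f (x + s *\<^sub>R ?v) - f x) / s) \<longlongrightarrow> g \<bullet> ?v) (at_right 0)"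
    by (rule tendsto_mono[rotated]) (simp add: at_le)
  \<comment> \<open>convexity bounds every difference quotient along the segment by the secant slope\<close>
  have "eventually (\<lambda>s. (f (x + s *\<^sub>R ?v) - f x) / s \<le> f y - f x) (at_right (0::real))"
    using eventually_at_right_real[OF zero_less_one]
  proof (rule eventually_mono)
    fix s :: real
    assume s: "s \<in> {0<..<1}"
    have "f ((1 - s) *\<^sub>R x + s *\<^sub>R y) \<le> (1 - s) * f x + s * f y"
      using convex_onD[OF cv, of s x y] s x y by auto
    moreover have "x + s *\<^sub>R ?v = (1 - s) *\<^sub>R x + s *\<^sub>R y"
      by (simp add: algebra_simps)
    ultimately have "f (x + s *\<^sub>R ?v) - f x \<le> s * (f y - f x)"
      by (simp add: algebra_simps)
    then show "(f (x + s *\<^sub>R ?v) - f x) / s \<le> f y - f x"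
      using s by (simp add: divide_le_eq mult.commute)
  qed
  then have "g \<bullet> ?v \<le> f y - f x"
    by (rule tendsto_upperbound[OF lim]) simp
  then show ?thesis
    by simp
qed

lemma convex_strict_epigraph:
  assumes "convex_on UNIV r"
  shows "convex {p. r (fst p) < snd p}"
  unfolding convex_def
proof (intro ballI allI impI, simp only: mem_Collect_eq)
  fix p q :: "'a \<times> real" and u v :: real
  assume p: "r (fst p) < snd p" and q: "r (fst q) < snd q" and u: "0 \<le> u" "0 \<le> v" "u + v = 1"
  have "r (u *\<^sub>R fst p + v *\<^sub>R fst q) \<le> u * r (fst p) + v * r (fst q)"
    using assms u unfolding convex_on_def by auto
  also have "\<dots> < u * snd p + v * snd q"
  proof (cases "u = 0")
    case False
    then have "u * r (fst p) < u * snd p"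
      using p u by simp
    moreover have "v * r (fst q) \<le> v * snd q"
      using q u by (simp add: mult_left_mono)
    ultimately show ?thesis
      by linarith
  qed (use q u in simp)
  finally show "r (fst (u *\<^sub>R p + v *\<^sub>R q)) < snd (u *\<^sub>R p + v *\<^sub>R q)"
    by simp
qed

text \<open>Subgradients come from a hyperplane separating the strict epigraph from a point on the
  graph; the hyperplane cannot be vertical because the epigraph contains a vertical ray.\<close>

lemma convex_on_has_subgradient:
  fixes r :: "'a::euclidean_space \<Rightarrow> real"
  assumes cv: "convex_on UNIV r"
  shows "\<exists>g. is_subgradient r x g"
proof -
  define S where "S = {p :: 'a \<times> real. r (fst p) < snd p}"
  have "convex S"
    unfolding S_def using cv by (rule convex_strict_epigraph)
  moreover have "(x, r x + 1) \<in> S" "S \<inter> {(x, r x)} = {}"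
    by (auto simp: S_def)
  moreover from this(1) have "S \<noteq> {}"
    by blast
  ultimately obtain a b where "a \<noteq> 0" "\<forall>p\<in>S. inner a p \<le> b" "b \<le> inner a (x, r x)"
    using separating_hyperplane_sets[of S "{(x, r x)}"] by auto
  moreover obtain g c where a: "a = (g, c)"
    by (cases a)
  ultimately have g0: "g \<noteq> 0 \<or> c \<noteq> 0"
    and sep: "\<And>z s. r z < s \<Longrightarrow> g \<bullet> z + c * s \<le> g \<bullet> x + c * r x"
    by (auto simp: S_def zero_prod_def) (meson order_trans)+
  have "c \<noteq> 0"
  proof
    assume "c = 0"
    then have "g \<bullet> (x + g) \<le> g \<bullet> x"
      using sep[of "x + g" "r (x + g) + 1"] by simp
    then show False
      using g0 \<open>c = 0\<close> by (simp add: inner_add_right) (metis inner_gt_zero_iff not_le)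
  qed
  moreover have "c \<le> 0"
    using sep[of x "r x + 1"] by (simp add: algebra_simps)
  ultimately have c: "c < 0"
    by simp
  have "r x + (- (1 / c) *\<^sub>R g) \<bullet> (z - x) \<le> r z" for z
  proof (rule ccontr)
    assume "\<not> ?thesis"
    then obtain s where "r z < s" and s: "s < r x + (- (1 / c) *\<^sub>R g) \<bullet> (z - x)"
      using dense by (metis not_le)
    have "c * (r x + (- (1 / c) *\<^sub>R g) \<bullet> (z - x)) < c * s"
      using s c by (simp add: mult_less_cancel_left_neg)
    moreover have "c * (r x + (- (1 / c) *\<^sub>R g) \<bullet> (z - x)) = c * r x - g \<bullet> (z - x)"
      using c by (simp add: algebra_simps inner_diff_right)
    ultimately show False
      using sep[OF \<open>r z < s\<close>] by (simp add: inner_diff_right)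
  qed
  then show ?thesis
    unfolding is_subgradient_def by blast
qed

text \<open>Comparing the objective at the minimiser with its value at the midpoint of \<open>z0\<close> and \<open>z1\<close>
  gives a quadratic lower bound on the decrease from \<open>z0\<close>.\<close>

lemma strongly_convex_minimizer_decrease:
  fixes ft r :: "'a::real_inner \<Rightarrow> real"
  assumes sc: "strongly_convex_on S ft \<tau>" and z0: "z0 \<in> S" and z1: "z1 \<in> S"
    and rc: "convex_on UNIV r"
    and mn: "\<And>z. z \<in> S \<Longrightarrow> ft z1 + c \<bullet> (z1 - w) + r z1 \<le> ft z + c \<bullet> (z - w) + r z"
  shows "\<tau> / 4 * (norm (z1 - z0))\<^sup>2 \<le> (ft z0 + c \<bullet> (z0 - w) + r z0) - (ft z1 + c \<bullet> (z1 - w) + r z1)"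
proof -
  let ?zm = "(1 / 2) *\<^sub>R z0 + (1 / 2) *\<^sub>R z1"
  have "?zm \<in> S"
    using strongly_convex_on_imp_convex[OF sc] z0 z1 unfolding convex_def by auto
  then have "ft z1 + c \<bullet> (z1 - w) + r z1 \<le> ft ?zm + c \<bullet> (?zm - w) + r ?zm"
    by (rule mn)
  moreover have "ft ?zm \<le> (1 / 2) * ft z0 + (1 / 2) * ft z1 - \<tau> / 2 * ((1 / 2) * (1 / 2) * (norm (z1 - z0))\<^sup>2)"
    using strongly_convex_onD[OF sc z0 z1, of "1 / 2" "1 / 2"] by (simp add: norm_minus_commute)
  moreover have "r ?zm \<le> (1 / 2) * r z0 + (1 / 2) * r z1"
    using convex_onD[OF rc, of "1 / 2" z0 z1] by simp
  moreover have "c \<bullet> (?zm - w) = (1 / 2) * (c \<bullet> (z0 - w)) + (1 / 2) * (c \<bullet> (z1 - w))"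
    by (simp add: inner_diff_right inner_add_right field_simps)
  ultimately show ?thesis
    by (simp add: algebra_simps)
qed

lemma strongly_convex_minimizer_dist_le:
  fixes ft r :: "'a::real_inner \<Rightarrow> real"
  assumes sc: "strongly_convex_on S ft \<tau>" and \<tau>: "0 < \<tau>"
    and z0: "z0 \<in> S" and z1: "z1 \<in> S"
    and d: "(ft has_derivative (\<lambda>h. g0 \<bullet> h)) (at z0)"
    and rc: "convex_on UNIV r" and gr: "is_subgradient r z0 gr"
    and mn: "\<And>z. z \<in> S \<Longrightarrow> ft z1 + c \<bullet> (z1 - w) + r z1 \<le> ft z + c \<bullet> (z - w) + r z"
  shows "norm (z1 - z0) \<le> 4 * (norm g0 + norm c + norm gr) / \<tau>"
proof -
  define D where "D = norm (z1 - z0)"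
  define K where "K = norm g0 + norm c + norm gr"
  have "ft z0 + g0 \<bullet> (z1 - z0) \<le> ft z1"
    using convex_on_gradient_ineq[OF strongly_convex_on_imp_convex_on[OF sc] z0 z1 d] \<tau> by simp
  moreover have "r z0 + gr \<bullet> (z1 - z0) \<le> r z1"
    using gr unfolding is_subgradient_def by blast
  moreover have "- (g0 \<bullet> (z1 - z0)) \<le> norm g0 * D"
    unfolding D_def using Cauchy_Schwarz_ineq2[of g0 "z1 - z0"] by (simp add: abs_le_iff)
  moreover have "c \<bullet> (z0 - w) - c \<bullet> (z1 - w) \<le> norm c * D"
    unfolding D_def using Cauchy_Schwarz_ineq2[of c "z0 - z1"]
    by (simp add: abs_le_iff norm_minus_commute inner_diff_right)
  moreover have "- (gr \<bullet> (z1 - z0)) \<le> norm gr * D"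
    unfolding D_def using Cauchy_Schwarz_ineq2[of gr "z1 - z0"] by (simp add: abs_le_iff)
  ultimately have "\<tau> / 4 * D\<^sup>2 \<le> K * D"
    using strongly_convex_minimizer_decrease[OF sc z0 z1 rc mn]
    unfolding D_def[symmetric] K_def distrib_right by linarith
  then have "\<tau> / 4 * D * D \<le> K * D"
    by (simp add: power2_eq_square)
  show ?thesis
  proof (cases "D = 0")
    case True
    then show ?thesis
      using \<tau> by (simp add: D_def K_def)
  next
    case False
    then have "\<tau> / 4 * D \<le> K"
      using \<open>\<tau> / 4 * D * D \<le> K * D\<close> D_def by (simp add: mult_le_cancel_right)
    then have "D \<le> 4 * K / \<tau>"
      using \<tau> by (simp add: pos_le_divide_eq algebra_simps)
    then show ?thesis
      unfolding D_def K_def .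
  qed
qed

section \<open>The algorithm\<close>

lemma norm_vec_le_sum: "norm (v :: 'a::real_normed_vector ^ 'n) \<le> (\<Sum>l\<in>UNIV. norm (v $ l))"
  unfolding norm_vec_def by (rule L2_set_le_sum) simp

lemma finite_common_bound:
  fixes P :: "'i::finite \<Rightarrow> 'a::linorder \<Rightarrow> bool"
  assumes ex: "\<And>i. \<exists>M. P i M" and mono: "\<And>i M M'. P i M \<Longrightarrow> M \<le> M' \<Longrightarrow> P i M'"
  shows "\<exists>M\<ge>c. \<forall>i. P i M"
proof -
  obtain m where m: "\<And>i. P i (m i)"
    using ex by metis
  have "P i (max c (Max (range m)))" for i
    using m[of i] by (rule mono) (simp add: le_max_iff_disj)
  then show ?thesis
    by (intro exI[of _ "max c (Max (range m))"]) simp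
qed

locale tracking_algorithm =
  fixes gf :: "'n::finite \<Rightarrow> real^'d::finite^'b::finite \<Rightarrow> real^'d^'b"
    and r :: "'b \<Rightarrow> real^'d \<Rightarrow> real"
    and Kb :: "'b \<Rightarrow> (real^'d) set"
    and E :: "('n \<times> 'n) set"
    and sel :: "nat \<Rightarrow> 'n \<Rightarrow> 'b"
    and A :: "nat \<Rightarrow> 'b \<Rightarrow> 'n \<Rightarrow> 'n \<Rightarrow> real"
    and \<kappa> :: real
    and ft :: "'n \<Rightarrow> 'b \<Rightarrow> real^'d \<Rightarrow> real^'d^'b \<Rightarrow> real"
    and gft :: "'n \<Rightarrow> 'b \<Rightarrow> real^'d \<Rightarrow> real^'d^'b \<Rightarrow> real^'d"
    and \<tau> :: "'n \<Rightarrow> real"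
    and \<gamma> :: "nat \<Rightarrow> real"
    and x y :: "nat \<Rightarrow> 'n \<Rightarrow> real^'d^'b"
    and \<phi> :: "nat \<Rightarrow> 'n \<Rightarrow> 'b \<Rightarrow> real"
    and xt :: "nat \<Rightarrow> 'n \<Rightarrow> real^'d"
  assumes K_convex: "\<And>l. convex (Kb l)"
    and gf_lip: "\<And>i. \<exists>L. \<forall>u\<in>prodset Kb. \<forall>v\<in>prodset Kb. norm (gf i u - gf i v) \<le> L * norm (u - v)"
    and gf_bdd: "\<And>i. \<exists>M. \<forall>u\<in>prodset Kb. norm (gf i u) \<le> M"
    and r_convex: "\<And>l. convex_on UNIV (r l)"
    and r_subgrad_bdd: "\<And>l. \<exists>M. \<forall>u\<in>Kb l. \<forall>g. is_subgradient (r l) u g \<longrightarrow> norm g \<le> M"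
    and E_loops: "\<And>i. (i, i) \<in> E"
    and E_sc: "\<And>i j. (i, j) \<in> E\<^sup>*"
    and sel_ess_cyclic: "\<And>i. \<exists>T>0. \<forall>t. (\<lambda>s. sel (t + s) i) ` {..<T} = UNIV"
    and \<kappa>_pos: "\<kappa> > 0"
    and A_pos: "\<And>t l i j. (j, i) \<in> edges_blk E sel t l \<Longrightarrow> A t l i j > \<kappa>"
    and A_zero: "\<And>t l i j. (j, i) \<notin> edges_blk E sel t l \<Longrightarrow> A t l i j = 0"
    and A_colstoch: "\<And>t l j. (\<Sum>i\<in>UNIV. A t l i j) = 1"
    and \<tau>_pos: "\<And>i. \<tau> i > 0"
    and ft_deriv: "\<And>i l u z. u \<in> prodset Kb \<Longrightarrow> z \<in> Kb l \<Longrightarrow>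
                 ((\<lambda>w. ft i l w u) has_derivative (\<lambda>h. gft i l z u \<bullet> h)) (at z)"
    and ft_sconvex: "\<And>i l u. u \<in> prodset Kb \<Longrightarrow> strongly_convex_on (Kb l) (\<lambda>z. ft i l z u) (\<tau> i)"
    and ft_grad_consistent: "\<And>i l u. u \<in> prodset Kb \<Longrightarrow> gft i l (u $ l) u = gf i u $ l"
    and \<gamma>_pos: "\<And>t. 0 < \<gamma> t" and \<gamma>_le1: "\<And>t. \<gamma> t \<le> 1"
    and \<gamma>_mono: "\<And>t. \<gamma> (Suc t) \<le> \<gamma> t"
    and \<gamma>_sq_summable: "summable (\<lambda>t. (\<gamma> t)\<^sup>2)"
    and x0: "\<And>i. x 0 i \<in> prodset Kb"
    and y0: "\<And>i. y 0 i = gf i (x 0 i)"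
    and \<phi>0: "\<And>i l. \<phi> 0 i l = 1"
    and xt_in: "\<And>t i. xt t i \<in> Kb (sel t i)"
    and xt_min: "\<And>t i z. z \<in> Kb (sel t i) \<Longrightarrow>
        ft i (sel t i) (xt t i) (x t i)
          + (of_nat CARD('n) *\<^sub>R (y t i $ sel t i) - gf i (x t i) $ sel t i) \<bullet> (xt t i - x t i $ sel t i)
          + r (sel t i) (xt t i)
        \<le> ft i (sel t i) z (x t i)
          + (of_nat CARD('n) *\<^sub>R (y t i $ sel t i) - gf i (x t i) $ sel t i) \<bullet> (z - x t i $ sel t i)
          + r (sel t i) z"
    and \<phi>_upd: "\<And>t i l. \<phi> (Suc t) i l = (\<Sum>j\<in>nbrs E sel t i l. A t l i j * \<phi> t j l)"
    and x_upd: "\<And>t i l. x (Suc t) i $ l =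
        (\<Sum>j\<in>nbrs E sel t i l. (A t l i j * \<phi> t j l / \<phi> (Suc t) i l) *\<^sub>R
            (x t j $ l + \<gamma> t *\<^sub>R (if l = sel t j then xt t j - x t j $ l else 0)))"
    and y_upd: "\<And>t i l. y (Suc t) i $ l =
        (\<Sum>j\<in>nbrs E sel t i l. (A t l i j / \<phi> (Suc t) i l) *\<^sub>R
            (\<phi> t j l *\<^sub>R (y t j $ l) + gf j (x (Suc t) j) $ l - gf j (x t j) $ l))"
begin

lemma \<gamma>_nonneg: "0 \<le> \<gamma> t"
  using \<gamma>_pos less_imp_le by blast

lemma A_nonneg: "0 \<le> A t l i j"
  using A_pos[of j i t l] A_zero[of j i t l] \<kappa>_pos by fastforce

lemma sum_nbrs_eq:
  assumes "\<And>j. A t l i j = 0 \<Longrightarrow> F j = 0"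
  shows "(\<Sum>j\<in>nbrs E sel t i l. F j) = (\<Sum>j\<in>UNIV. F j)"
proof (rule sum.mono_neutral_left)
  show "\<forall>j\<in>UNIV - nbrs E sel t i l. F j = 0"
    using assms A_zero by (auto simp: edges_blk_def)
qed auto

lemma uniformly_connected_weights:
  obtains T where "uniformly_connected (\<lambda>t i j. A t l i j) E \<kappa> T"
proof -
  have ex: "\<exists>T. \<forall>t. (\<lambda>s. sel (t + s) i) ` {..<T} = UNIV" for i
    using sel_ess_cyclic by blast
  have mono: "\<forall>t. (\<lambda>s. sel (t + s) i) ` {..<T'} = UNIV"
    if "\<forall>t. (\<lambda>s. sel (t + s) i) ` {..<T} = UNIV" "T \<le> T'" for i T T'
  proof
    fix t
    have "(\<lambda>s. sel (t + s) i) ` {..<T} \<subseteq> (\<lambda>s. sel (t + s) i) ` {..<T'}"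
      using that(2) by (intro image_mono) auto
    then have "UNIV \<subseteq> (\<lambda>s. sel (t + s) i) ` {..<T'}"
      using that(1) by simp
    then show "(\<lambda>s. sel (t + s) i) ` {..<T'} = UNIV"
      by (rule top.extremum_uniqueI)
  qed
  have "\<exists>T\<ge>1. \<forall>i. \<forall>t. (\<lambda>s. sel (t + s) i) ` {..<T} = UNIV"
    by (rule finite_common_bound[OF ex], erule mono)
  then obtain T :: nat where T: "1 \<le> T" "\<And>i. \<forall>t. (\<lambda>s. sel (t + s) i) ` {..<T} = UNIV"
    by blast
  show thesis
  proof (rule that, unfold_locales)
    show "0 \<le> A t l i j" for t i j
      by (rule A_nonneg)
    show "(\<Sum>i\<in>UNIV. A t l i j) = 1" for t j
      by (rule A_colstoch)
    show "\<kappa> \<le> A t l i i" for t i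
      by (rule less_imp_le[OF A_pos]) (simp add: edges_blk_def nbrs_def E_loops)
    show "0 < T"
      using T(1) by simp
    show "(j, i) \<in> E\<^sup>*" for i j
      by (rule E_sc)
    show "\<exists>\<tau>'. s \<le> \<tau>' \<and> \<tau>' < s + T \<and> \<kappa> \<le> A \<tau>' l i j" if "(j, i) \<in> E" for i j s
    proof -
      have "l \<in> (\<lambda>s'. sel (s + s') j) ` {..<T}"
        using T(2)[of j] by simp
      then obtain s' where s': "s' < T" "sel (s + s') j = l"
        by auto
      then have "(j, i) \<in> edges_blk E sel (s + s') l"
        using that by (auto simp: edges_blk_def nbrs_def)
      then show ?thesis
        using s' A_pos by (intro exI[of _ "s + s'"]) (auto intro: less_imp_le)
    qed
  qed (rule \<kappa>_pos)
qed

lemma phi_bounds: "0 < \<phi> t i l" "\<phi> t i l \<le> real CARD('n)"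
proof -
  obtain T where "uniformly_connected (\<lambda>t i j. A t l i j) E \<kappa> T"
    by (rule uniformly_connected_weights) blast
  then interpret P: uniformly_connected "\<lambda>t i j. A t l i j" E \<kappa> T .
  have \<phi>_eq: "\<phi> t i l = P.weight t i"
    by (rule P.weight_unique) (simp_all add: \<phi>_upd \<phi>0 sum_nbrs_eq)
  show "0 < \<phi> t i l"
    using P.weight_ge P.\<eta>_pos \<phi>_eq by (metis order.strict_trans2)
  have "P.weight t i \<le> (\<Sum>j\<in>(UNIV::'n set). 1)"
    unfolding P.weight_def by (intro sum_mono P.mprod_le_1)
  then show "\<phi> t i l \<le> real CARD('n)"
    using \<phi>_eq by simp
qed

lemma tracking_bound:
  fixes z e :: "nat \<Rightarrow> 'n \<Rightarrow> 'v::real_normed_vector"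
  assumes rec: "\<And>t i. \<phi> (Suc t) i l *\<^sub>R z (Suc t) i
                  = (\<Sum>j\<in>nbrs E sel t i l. A t l i j *\<^sub>R (\<phi> t j l *\<^sub>R z t j + e t j))"
  obtains K \<rho> where "0 \<le> K" "0 < \<rho>" "\<rho> < 1"
    "\<And>t i. norm (z t i - (1 / real CARD('n)) *\<^sub>R ((\<Sum>j\<in>UNIV. z 0 j) + (\<Sum>k<t. \<Sum>j\<in>UNIV. e k j)))
             \<le> K * (\<rho> ^ t + gconv \<rho> (\<lambda>k. \<Sum>j\<in>UNIV. norm (e k j)) t)"
proof -
  obtain T where "uniformly_connected (\<lambda>t i j. A t l i j) E \<kappa> T"
    by (rule uniformly_connected_weights) blast
  then interpret P: uniformly_connected "\<lambda>t i j. A t l i j" E \<kappa> T .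
  define u where "u t i = \<phi> t i l *\<^sub>R z t i" for t i
  define U0 where "U0 = (\<Sum>j\<in>UNIV. norm (z 0 j))"
  define en where "en = (\<lambda>k. \<Sum>j\<in>UNIV. norm (e k j))"
  have \<phi>_eq: "\<phi> t i l = P.weight t i" for t i
    by (rule P.weight_unique) (simp_all add: \<phi>_upd \<phi>0 sum_nbrs_eq)
  have u_rec: "u (Suc t) i = (\<Sum>j\<in>UNIV. A t l i j *\<^sub>R (u t j + e t j))" for t i
    using rec[of t i] by (simp add: u_def sum_nbrs_eq)
  have U0: "0 \<le> U0"
    by (simp add: U0_def sum_nonneg)
  have gc: "0 \<le> gconv P.rate en t" for t
    using P.rate_bounds by (intro gconv_nonneg) (auto simp: en_def intro: sum_nonneg)
  show thesis
  proof (rule that[of "P.gain / P.\<eta> * (U0 + 1)" P.rate])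
    show "0 \<le> P.gain / P.\<eta> * (U0 + 1)"
      using P.gain_pos P.\<eta>_pos U0 by simp
    show "0 < P.rate" "P.rate < 1"
      by (fact P.rate_bounds)+
    fix t i
    have z_eq: "z t i = (1 / P.weight t i) *\<^sub>R u t i"
      using phi_bounds(1)[of t i l] by (simp add: u_def \<phi>_eq)
    have u0: "u 0 = z 0"
      by (simp add: u_def \<phi>0 fun_eq_iff)
    have "norm (z t i - (1 / real CARD('n)) *\<^sub>R ((\<Sum>j\<in>UNIV. z 0 j) + (\<Sum>k<t. \<Sum>j\<in>UNIV. e k j)))
        \<le> P.gain / P.\<eta> * (P.rate ^ t * U0 + gconv P.rate en t)"
      using P.perturbed_consensus_bound[OF u_rec, of t i, unfolded u0]
      unfolding z_eq U0_def en_def .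
    also have "\<dots> \<le> P.gain / P.\<eta> * (U0 + 1) * (P.rate ^ t + gconv P.rate en t)"
    proof -
      have "0 \<le> U0 * gconv P.rate en t" "0 \<le> P.rate ^ t"
        using U0 gc[of t] P.rate_bounds by simp_all
      then have "P.rate ^ t * U0 + gconv P.rate en t \<le> (U0 + 1) * (P.rate ^ t + gconv P.rate en t)"
        by (simp add: algebra_simps)
      then show ?thesis
        unfolding mult.assoc[of "P.gain / P.\<eta>"] using P.gain_pos P.\<eta>_pos by (intro mult_left_mono) simp_all
    qed
    finally show "norm (z t i - (1 / real CARD('n)) *\<^sub>R ((\<Sum>j\<in>UNIV. z 0 j) + (\<Sum>k<t. \<Sum>j\<in>UNIV. e k j)))
        \<le> P.gain / P.\<eta> * (U0 + 1) * (P.rate ^ t + gconv P.rate (\<lambda>k. \<Sum>j\<in>UNIV. norm (e k j)) t)"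
      unfolding en_def .
  qed
qed

lemma x_in_K: "x t i \<in> prodset Kb"
proof (induction t arbitrary: i)
  case 0
  then show ?case
    by (rule x0)
next
  case (Suc t)
  show ?case
    unfolding prodset_def
  proof (intro CollectI allI)
    fix l
    have x_in: "x t j $ l \<in> Kb l" for j
      using Suc[of j] by (simp add: prodset_def)
    have step_in: "x t j $ l + \<gamma> t *\<^sub>R (if l = sel t j then xt t j - x t j $ l else 0) \<in> Kb l" for j
    proof (cases "l = sel t j")
      case True
      have "(1 - \<gamma> t) *\<^sub>R (x t j $ l) + \<gamma> t *\<^sub>R xt t j \<in> Kb l"
        using K_convex[of l] x_in[of j] xt_in[of t j] True \<gamma>_pos[of t] \<gamma>_le1[of t]
        unfolding convex_def by auto
      moreover have "x t j $ l + \<gamma> t *\<^sub>R (xt t j - x t j $ l) = (1 - \<gamma> t) *\<^sub>R (x t j $ l) + \<gamma> t *\<^sub>R xt t j"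
        by (simp add: algebra_simps)
      ultimately show ?thesis
        using True by simp
    qed (use x_in in simp)
    have "(\<Sum>j\<in>nbrs E sel t i l. A t l i j * \<phi> t j l / \<phi> (Suc t) i l) = 1"
      using phi_bounds(1)[of "Suc t" i l] by (simp add: sum_divide_distrib[symmetric] \<phi>_upd[symmetric])
    then show "x (Suc t) i $ l \<in> Kb l"
      unfolding x_upd using step_in phi_bounds(1)
      by (intro convex_sum) (auto simp: K_convex A_nonneg less_imp_le)
  qed
qed

definition avg_grad :: "nat \<Rightarrow> real^'d^'b" where
  "avg_grad t = (1 / real CARD('n)) *\<^sub>R (\<Sum>j\<in>UNIV. gf j (x t j))"

definition grad_incr :: "nat \<Rightarrow> real" where
  "grad_incr t = (\<Sum>j\<in>UNIV. norm (gf j (x (Suc t) j) - gf j (x t j)))"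

lemma gradient_bound:
  obtains G where "0 \<le> G" "\<And>i u. u \<in> prodset Kb \<Longrightarrow> norm (gf i u) \<le> G"
proof -
  have "\<exists>G\<ge>0. \<forall>i. \<forall>u\<in>prodset Kb. norm (gf i u) \<le> G"
    by (rule finite_common_bound[OF gf_bdd]) (meson order_trans)
  then show thesis
    using that by blast
qed

lemma lipschitz_bound:
  obtains L where "0 \<le> L"
    "\<And>i u v. u \<in> prodset Kb \<Longrightarrow> v \<in> prodset Kb \<Longrightarrow> norm (gf i u - gf i v) \<le> L * norm (u - v)"
proof -
  have "\<exists>L\<ge>0. \<forall>i. \<forall>u\<in>prodset Kb. \<forall>v\<in>prodset Kb. norm (gf i u - gf i v) \<le> L * norm (u - v)"
    by (rule finite_common_bound[OF gf_lip]) (meson mult_right_mono norm_ge_zero order_trans)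
  then show thesis
    using that by blast
qed

lemma subgradient_bound:
  obtains R where "\<And>l u g. u \<in> Kb l \<Longrightarrow> is_subgradient (r l) u g \<Longrightarrow> norm g \<le> R"
proof -
  have "\<exists>R\<ge>0. \<forall>l. \<forall>u\<in>Kb l. \<forall>g. is_subgradient (r l) u g \<longrightarrow> norm g \<le> R"
    by (rule finite_common_bound[OF r_subgrad_bdd]) (meson order_trans)
  then show thesis
    using that by blast
qed

lemma avg_grad_bound:
  assumes G: "\<And>i u. u \<in> prodset Kb \<Longrightarrow> norm (gf i u) \<le> G"
  shows "norm (avg_grad t) \<le> G"
proof -
  have "norm (\<Sum>j\<in>UNIV. gf j (x t j)) \<le> (\<Sum>j\<in>(UNIV::'n set). G)"
    by (rule order_trans[OF norm_sum sum_mono]) (rule G[OF x_in_K])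
  then show ?thesis
    by (simp add: avg_grad_def field_simps)
qed

lemma grad_incr_bound:
  assumes G: "\<And>i u. u \<in> prodset Kb \<Longrightarrow> norm (gf i u) \<le> G"
  shows "grad_incr t \<le> 2 * real CARD('n) * G"
proof -
  have "grad_incr t \<le> (\<Sum>j\<in>(UNIV::'n set). 2 * G)"
    unfolding grad_incr_def
  proof (rule sum_mono)
    fix j
    have "norm (gf j (x (Suc t) j) - gf j (x t j)) \<le> norm (gf j (x (Suc t) j)) + norm (gf j (x t j))"
      by (rule norm_triangle_ineq4)
    also have "\<dots> \<le> 2 * G"
      using G[OF x_in_K[of "Suc t" j], of j] G[OF x_in_K[of t j], of j] by simp
    finally show "norm (gf j (x (Suc t) j) - gf j (x t j)) \<le> 2 * G" .
  qed
  then show ?thesis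
    by simp
qed

lemma tracking_error_block:
  obtains K \<rho> where "0 \<le> K" "0 < \<rho>" "\<rho> < 1"
    "\<And>t i. norm (y t i $ l - avg_grad t $ l) \<le> K * (\<rho> ^ t + gconv \<rho> grad_incr t)"
proof -
  define e where "e t j = gf j (x (Suc t) j) $ l - gf j (x t j) $ l" for t j
  have rec: "\<phi> (Suc t) i l *\<^sub>R y (Suc t) i $ l
      = (\<Sum>j\<in>nbrs E sel t i l. A t l i j *\<^sub>R (\<phi> t j l *\<^sub>R y t j $ l + e t j))" for t i
    using phi_bounds(1)[of "Suc t" i l] by (simp add: y_upd e_def scaleR_sum_right algebra_simps)
  obtain K \<rho> where K: "0 \<le> K" "0 < \<rho>" "\<rho> < 1"
    and bound: "\<And>t i. norm (y t i $ l - (1 / real CARD('n)) *\<^sub>R ((\<Sum>j\<in>UNIV. y 0 j $ l) + (\<Sum>k<t. \<Sum>j\<in>UNIV. e k j)))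
                  \<le> K * (\<rho> ^ t + gconv \<rho> (\<lambda>k. \<Sum>j\<in>UNIV. norm (e k j)) t)"
    by (rule tracking_bound[where z="\<lambda>t i. y t i $ l", OF rec]) blast
  have total: "(\<Sum>j\<in>UNIV. y 0 j $ l) + (\<Sum>k<t. \<Sum>j\<in>UNIV. e k j) = (\<Sum>j\<in>UNIV. gf j (x t j) $ l)" for t
  proof -
    have "(\<Sum>k<t. \<Sum>j\<in>UNIV. e k j) = (\<Sum>j\<in>UNIV. \<Sum>k<t. e k j)"
      by (rule sum.swap)
    also have "\<dots> = (\<Sum>j\<in>UNIV. gf j (x t j) $ l - gf j (x 0 j) $ l)"
      unfolding e_def by (intro sum.cong refl sum_lessThan_telescope)
    finally show ?thesis
      by (simp add: y0 sum_subtractf)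
  qed
  have e_le: "(\<Sum>j\<in>UNIV. norm (e k j)) \<le> grad_incr k" for k
    unfolding grad_incr_def e_def
    by (intro sum_mono) (metis vector_minus_component Finite_Cartesian_Product.norm_nth_le)
  show thesis
  proof (rule that[OF K])
    fix t i
    have "avg_grad t $ l = (1 / real CARD('n)) *\<^sub>R (\<Sum>j\<in>UNIV. gf j (x t j) $ l)"
      by (simp add: avg_grad_def)
    then have "norm (y t i $ l - avg_grad t $ l) \<le> K * (\<rho> ^ t + gconv \<rho> (\<lambda>k. \<Sum>j\<in>UNIV. norm (e k j)) t)"
      using bound[of t i] by (simp only: total)
    also have "\<dots> \<le> K * (\<rho> ^ t + gconv \<rho> grad_incr t)"
      using K e_le by (intro mult_left_mono add_left_mono gconv_mono) auto
    finally show "norm (y t i $ l - avg_grad t $ l) \<le> K * (\<rho> ^ t + gconv \<rho> grad_incr t)" .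
  qed
qed

lemma y_bounded:
  obtains Y where "\<And>t i l. norm (y t i $ l) \<le> Y"
proof -
  obtain G where G: "0 \<le> G" "\<And>i u. u \<in> prodset Kb \<Longrightarrow> norm (gf i u) \<le> G"
    by (rule gradient_bound) blast
  have "\<exists>Y. \<forall>t i. norm (y t i $ l) \<le> Y" for l
  proof -
    obtain K \<rho> where K: "0 \<le> K" "0 < \<rho>" "\<rho> < 1"
      and bound: "\<And>t i. norm (y t i $ l - avg_grad t $ l) \<le> K * (\<rho> ^ t + gconv \<rho> grad_incr t)"
      by (rule tracking_error_block) blast
    have "norm (y t i $ l) \<le> G + K * (1 + 2 * real CARD('n) * G / (1 - \<rho>))" for t i
    proof -
      have "gconv \<rho> grad_incr t \<le> 2 * real CARD('n) * G / (1 - \<rho>)"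
        using K G by (intro gconv_bounded grad_incr_bound) auto
      moreover have "\<rho> ^ t \<le> 1"
        using K by (simp add: power_le_one)
      ultimately have "K * (\<rho> ^ t + gconv \<rho> grad_incr t) \<le> K * (1 + 2 * real CARD('n) * G / (1 - \<rho>))"
        using K by (intro mult_left_mono add_mono) auto
      moreover have "norm (avg_grad t $ l) \<le> G"
        using avg_grad_bound[OF G(2)] Finite_Cartesian_Product.norm_nth_le order_trans by blast
      moreover have "norm (y t i $ l) \<le> norm (avg_grad t $ l) + norm (y t i $ l - avg_grad t $ l)"
        by (rule norm_triangle_sub)
      ultimately show ?thesis
        using bound[of t i] by linarith
    qed
    then show ?thesis
      by blast
  qed
  then have "\<exists>Y\<ge>0. \<forall>l. \<forall>t i. norm (y t i $ l) \<le> Y"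
    by (rule finite_common_bound) (meson order_trans)
  then show thesis
    using that by blast
qed

text \<open>The surrogate problem is strongly convex and all linear terms in it (surrogate gradient,
  tracked gradient, subgradient of r) are bounded.\<close>

lemma local_step_le:
  assumes G: "\<And>i u. u \<in> prodset Kb \<Longrightarrow> norm (gf i u) \<le> G"
    and Y: "\<And>t i l. norm (y t i $ l) \<le> Y"
    and R: "\<And>l u g. u \<in> Kb l \<Longrightarrow> is_subgradient (r l) u g \<Longrightarrow> norm g \<le> R"
  shows "norm (xt t i - x t i $ sel t i) \<le> 4 * (G + (real CARD('n) * Y + G) + R) / \<tau> i"
proof -
  let ?l = "sel t i" and ?x = "x t i"
  let ?c = "of_nat CARD('n) *\<^sub>R (y t i $ ?l) - gf i ?x $ ?l"
  have xK: "?x \<in> prodset Kb"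
    by (rule x_in_K)
  then have z0: "?x $ ?l \<in> Kb ?l"
    by (simp add: prodset_def)
  obtain gr where gr: "is_subgradient (r ?l) (?x $ ?l) gr"
    using convex_on_has_subgradient[OF r_convex] by blast
  have gf_l: "norm (gf i ?x $ ?l) \<le> G"
    using G[OF xK, of i] Finite_Cartesian_Product.norm_nth_le[of "gf i ?x" ?l] by linarith
  have "norm (xt t i - ?x $ ?l) \<le> 4 * (norm (gft i ?l (?x $ ?l) ?x) + norm ?c + norm gr) / \<tau> i"
  proof (rule strongly_convex_minimizer_dist_le[OF ft_sconvex[OF xK] \<tau>_pos z0 xt_in
        ft_deriv[OF xK z0] r_convex gr])
    fix z
    assume "z \<in> Kb ?l"
    then show "ft i ?l (xt t i) ?x + ?c \<bullet> (xt t i - ?x $ ?l) + r ?l (xt t i)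
        \<le> ft i ?l z ?x + ?c \<bullet> (z - ?x $ ?l) + r ?l z"
      by (rule xt_min)
  qed
  also have "\<dots> \<le> 4 * (G + (real CARD('n) * Y + G) + R) / \<tau> i"
  proof -
    have "norm (gft i ?l (?x $ ?l) ?x) \<le> G"
      using gf_l ft_grad_consistent[OF xK] by simp
    moreover have "norm ?c \<le> real CARD('n) * Y + G"
      using norm_triangle_ineq4[of "of_nat CARD('n) *\<^sub>R (y t i $ ?l)" "gf i ?x $ ?l"] gf_l
        mult_left_mono[OF Y[of t i ?l], of "real CARD('n)"] by (simp only: norm_scaleR abs_of_nat) linarith
    moreover have "norm gr \<le> R"
      by (rule R[OF z0 gr])
    ultimately show ?thesis
      using \<tau>_pos[of i] by (intro divide_right_mono mult_left_mono add_mono) auto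
  qed
  finally show ?thesis .
qed

lemma local_step_bounded:
  obtains D where "0 \<le> D" "\<And>t i. norm (xt t i - x t i $ sel t i) \<le> D"
proof -
  obtain G where "0 \<le> G" "\<And>i u. u \<in> prodset Kb \<Longrightarrow> norm (gf i u) \<le> G"
    by (rule gradient_bound) blast
  moreover obtain Y where "\<And>t i l. norm (y t i $ l) \<le> Y"
    by (rule y_bounded) blast
  moreover obtain R where "\<And>l u g. u \<in> Kb l \<Longrightarrow> is_subgradient (r l) u g \<Longrightarrow> norm g \<le> R"
    by (rule subgradient_bound) blast
  ultimately have step: "\<forall>t. norm (xt t i - x t i $ sel t i) \<le> 4 * (G + (real CARD('n) * Y + G) + R) / \<tau> i"
    for i
    by (blast intro: local_step_le)
  have "\<exists>D\<ge>0. \<forall>i. \<forall>t. norm (xt t i - x t i $ sel t i) \<le> D"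
    by (rule finite_common_bound) (use step in blast, meson order_trans)
  then show thesis
    using that by blast
qed

definition x_input :: "nat \<Rightarrow> 'n \<Rightarrow> 'b \<Rightarrow> real^'d" where
  "x_input t j l = (\<phi> t j l * \<gamma> t) *\<^sub>R (if l = sel t j then xt t j - x t j $ l else 0)"

lemma x_block_rec:
  "\<phi> (Suc t) i l *\<^sub>R x (Suc t) i $ l
     = (\<Sum>j\<in>nbrs E sel t i l. A t l i j *\<^sub>R (\<phi> t j l *\<^sub>R x t j $ l + x_input t j l))"
  using phi_bounds(1)[of "Suc t" i l] by (simp add: x_upd x_input_def scaleR_sum_right algebra_simps)

lemma x_input_bound:
  obtains C where "0 \<le> C" "\<And>t j l. norm (x_input t j l) \<le> C * \<gamma> t"
proof -
  obtain D where D: "0 \<le> D" "\<And>t j. norm (xt t j - x t j $ sel t j) \<le> D"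
    by (rule local_step_bounded) blast
  have "norm (x_input t j l) \<le> real CARD('n) * D * \<gamma> t" for t j l
  proof -
    have "norm (if l = sel t j then xt t j - x t j $ l else 0) \<le> D"
      using D by auto
    moreover have "\<phi> t j l * \<gamma> t \<le> real CARD('n) * \<gamma> t"
      using phi_bounds(2) \<gamma>_nonneg by (rule mult_right_mono)
    ultimately have "(\<phi> t j l * \<gamma> t) * norm (if l = sel t j then xt t j - x t j $ l else 0)
        \<le> real CARD('n) * \<gamma> t * D"
      using phi_bounds[of t j l] \<gamma>_nonneg[of t] by (intro mult_mono) simp_all
    then show ?thesis
      using phi_bounds(1)[of t j l] \<gamma>_nonneg[of t] by (simp add: x_input_def algebra_simps)
  qed
  then show thesis
    using that[of "real CARD('n) * D"] D(1) by simp
qed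

text \<open>Along block l the local copies run push-sum perturbed by inputs of order \<gamma>, so they
  follow a slowly moving network average.\<close>

lemma block_step_negligible: "negligible_seq \<gamma> (\<lambda>t. norm (x (Suc t) i $ l - x t i $ l))"
proof -
  define b where "b = (\<lambda>t. \<Sum>j\<in>UNIV. norm (x_input t j l))"
  define S where "S t = (1 / real CARD('n)) *\<^sub>R ((\<Sum>j\<in>UNIV. x 0 j $ l) + (\<Sum>k<t. \<Sum>j\<in>UNIV. x_input k j l))"
    for t
  obtain K \<rho> where K: "0 \<le> K" "0 < \<rho>" "\<rho> < 1"
    and track: "\<And>t j. norm (x t j $ l - S t) \<le> K * (\<rho> ^ t + gconv \<rho> b t)"
    unfolding S_def b_def
    by (rule tracking_bound[where z="\<lambda>t j. x t j $ l" and e="\<lambda>t j. x_input t j l", OF x_block_rec]) blast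
  obtain C where C: "0 \<le> C" "\<And>t j. norm (x_input t j l) \<le> C * \<gamma> t"
    by (rule x_input_bound) blast
  have b_nonneg: "0 \<le> b t" for t
    by (simp add: b_def sum_nonneg)
  have b_le: "b t \<le> (real CARD('n) * C) * \<gamma> t" for t
    using sum_mono[of UNIV "\<lambda>j. norm (x_input t j l)" "\<lambda>j. C * \<gamma> t"] C(2) by (simp add: b_def)
  have "negligible_seq \<gamma> (\<lambda>t. (real CARD('n) * C) * \<gamma> t)"
    using C(1) \<gamma>_nonneg \<gamma>_sq_summable by (intro negligible_seq_cmult negligible_seq_step_sizes) auto
  then have b_negligible: "negligible_seq \<gamma> b"
    using b_nonneg \<gamma>_nonneg b_le by (rule negligible_seq_le)
  have S_step: "norm (S (Suc t) - S t) \<le> b t" for t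
  proof -
    have "norm (S (Suc t) - S t) = norm (\<Sum>j\<in>UNIV. x_input t j l) / real CARD('n)"
      by (simp add: S_def scaleR_add_right)
    also have "\<dots> \<le> norm (\<Sum>j\<in>UNIV. x_input t j l) / 1"
      by (rule frac_le) (simp_all add: Suc_le_eq)
    also have "\<dots> \<le> b t"
      unfolding b_def by (simp add: norm_sum)
    finally show ?thesis .
  qed
  have "negligible_seq \<gamma> (\<lambda>t. (2 * K + 1) * (\<rho> ^ t + gconv \<rho> b t + b t))"
    using K \<gamma>_nonneg \<gamma>_le1 \<gamma>_mono b_negligible
    by (intro negligible_seq_cmult negligible_seq_add negligible_seq_power negligible_seq_gconv) auto
  then show ?thesis
    by (rule negligible_seq_le)
       (use \<gamma>_nonneg tracked_step_le[OF _ _ _ b_nonneg track S_step] K in auto)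
qed

lemma grad_incr_negligible: "negligible_seq \<gamma> grad_incr"
proof -
  obtain L where L: "0 \<le> L"
    "\<And>i u v. u \<in> prodset Kb \<Longrightarrow> v \<in> prodset Kb \<Longrightarrow> norm (gf i u - gf i v) \<le> L * norm (u - v)"
    by (rule lipschitz_bound) blast
  define b where "b t = L * (\<Sum>j\<in>UNIV. \<Sum>l\<in>UNIV. norm (x (Suc t) j $ l - x t j $ l))" for t
  have le_b: "grad_incr t \<le> b t" for t
  proof -
    have "grad_incr t \<le> (\<Sum>j\<in>UNIV. L * norm (x (Suc t) j - x t j))"
      unfolding grad_incr_def by (intro sum_mono L(2) x_in_K)
    also have "\<dots> \<le> (\<Sum>j\<in>UNIV. L * (\<Sum>l\<in>UNIV. norm (x (Suc t) j $ l - x t j $ l)))"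
    proof (intro sum_mono mult_left_mono[OF _ L(1)])
      fix j
      show "norm (x (Suc t) j - x t j) \<le> (\<Sum>l\<in>UNIV. norm (x (Suc t) j $ l - x t j $ l))"
        using norm_vec_le_sum[of "x (Suc t) j - x t j"] by simp
    qed
    finally show ?thesis
      by (simp add: b_def sum_distrib_left)
  qed
  have "negligible_seq \<gamma> b"
    unfolding b_def using L(1) by (intro negligible_seq_cmult negligible_seq_sum block_step_negligible)
  moreover have "0 \<le> grad_incr t" for t
    unfolding grad_incr_def by (rule sum_nonneg) simp
  ultimately show ?thesis
    using \<gamma>_nonneg le_b by (rule negligible_seq_le)
qed

lemma tracking_error_negligible: "negligible_seq \<gamma> (\<lambda>t. norm (y t i - avg_grad t))"
proof -
  have block: "negligible_seq \<gamma> (\<lambda>t. norm (y t i $ l - avg_grad t $ l))" for l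
  proof -
    obtain K \<rho> where K: "0 \<le> K" "0 < \<rho>" "\<rho> < 1"
      and bound: "\<And>t i. norm (y t i $ l - avg_grad t $ l) \<le> K * (\<rho> ^ t + gconv \<rho> grad_incr t)"
      by (rule tracking_error_block) blast
    have "negligible_seq \<gamma> (\<lambda>t. K * (\<rho> ^ t + gconv \<rho> grad_incr t))"
      using K \<gamma>_nonneg \<gamma>_le1 \<gamma>_mono grad_incr_negligible
      by (intro negligible_seq_cmult negligible_seq_add negligible_seq_power negligible_seq_gconv) auto
    moreover have "0 \<le> norm (y t i $ l - avg_grad t $ l)" for t
      by simp
    ultimately show ?thesis
      using \<gamma>_nonneg bound by (rule negligible_seq_le)
  qed
  have "negligible_seq \<gamma> (\<lambda>t. \<Sum>l\<in>UNIV. norm (y t i $ l - avg_grad t $ l))"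
    by (rule negligible_seq_sum) (rule block)
  moreover have "0 \<le> norm (y t i - avg_grad t)" for t
    by simp
  moreover note \<gamma>_nonneg
  moreover have "norm (y t i - avg_grad t) \<le> (\<Sum>l\<in>UNIV. norm (y t i $ l - avg_grad t $ l))" for t
    using norm_vec_le_sum[of "y t i - avg_grad t"] by simp
  ultimately show ?thesis
    by (rule negligible_seq_le)
qed
end

theorem mainTheorem6:
  fixes f :: "'n::finite \<Rightarrow> real^'d::finite^'b::finite \<Rightarrow> real"
    and gf :: "'n \<Rightarrow> real^'d^'b \<Rightarrow> real^'d^'b"
    and r :: "'b \<Rightarrow> real^'d \<Rightarrow> real"
    and Kb :: "'b \<Rightarrow> (real^'d) set"
    and E :: "('n \<times> 'n) set"
    and sel :: "nat \<Rightarrow> 'n \<Rightarrow> 'b"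
    and A :: "nat \<Rightarrow> 'b \<Rightarrow> 'n \<Rightarrow> 'n \<Rightarrow> real"
    and \<kappa> :: real
    and ft :: "'n \<Rightarrow> 'b \<Rightarrow> real^'d \<Rightarrow> real^'d^'b \<Rightarrow> real"
    and gft :: "'n \<Rightarrow> 'b \<Rightarrow> real^'d \<Rightarrow> real^'d^'b \<Rightarrow> real^'d"
    and \<tau> :: "'n \<Rightarrow> real"
    and \<gamma> :: "nat \<Rightarrow> real"
    and x y :: "nat \<Rightarrow> 'n \<Rightarrow> real^'d^'b"
    and \<phi> :: "nat \<Rightarrow> 'n \<Rightarrow> 'b \<Rightarrow> real"
    and xt :: "nat \<Rightarrow> 'n \<Rightarrow> real^'d"
  assumes K_ne: "\<And>l. Kb l \<noteq> {}"
    and K_closed: "\<And>l. closed (Kb l)"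
    and K_convex: "\<And>l. convex (Kb l)"
    and f_C1: "\<And>i. \<exists>S. open S \<and> prodset Kb \<subseteq> S \<and>
                 (\<forall>u\<in>S. (f i has_derivative (\<lambda>h. gf i u \<bullet> h)) (at u)) \<and> continuous_on S (gf i)"
    and gf_lip: "\<And>i. \<exists>L. \<forall>u\<in>prodset Kb. \<forall>v\<in>prodset Kb. norm (gf i u - gf i v) \<le> L * norm (u - v)"
    and gf_bdd: "\<And>i. \<exists>M. \<forall>u\<in>prodset Kb. norm (gf i u) \<le> M"
    and r_convex: "\<And>l. convex_on UNIV (r l)"
    and r_subgrad_bdd: "\<And>l. \<exists>M. \<forall>u\<in>Kb l. \<forall>g. is_subgradient (r l) u g \<longrightarrow> norm g \<le> M"
    and U_coercive: "coercive_on (prodset Kb) (\<lambda>u. (\<Sum>i\<in>UNIV. f i u) + (\<Sum>l\<in>UNIV. r l (u $ l)))"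
    and E_loops: "\<And>i. (i, i) \<in> E"
    and E_sc: "\<And>i j. (i, j) \<in> E\<^sup>*"
    and sel_ess_cyclic: "\<And>i. \<exists>T>0. \<forall>t. (\<lambda>s. sel (t + s) i) ` {..<T} = UNIV"
    and \<kappa>_pos: "\<kappa> > 0"
    and A_pos: "\<And>t l i j. (j, i) \<in> edges_blk E sel t l \<Longrightarrow> A t l i j > \<kappa>"
    and A_zero: "\<And>t l i j. (j, i) \<notin> edges_blk E sel t l \<Longrightarrow> A t l i j = 0"
    and A_colstoch: "\<And>t l j. (\<Sum>i\<in>UNIV. A t l i j) = 1"
    and \<tau>_pos: "\<And>i. \<tau> i > 0"
    and ft_deriv: "\<And>i l u z. u \<in> prodset Kb \<Longrightarrow> z \<in> Kb l \<Longrightarrow>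
                 ((\<lambda>w. ft i l w u) has_derivative (\<lambda>h. gft i l z u \<bullet> h)) (at z)"
    and ft_C1: "\<And>i l u. u \<in> prodset Kb \<Longrightarrow> continuous_on (Kb l) (\<lambda>z. gft i l z u)"
    and ft_sconvex: "\<And>i l u. u \<in> prodset Kb \<Longrightarrow> strongly_convex_on (Kb l) (\<lambda>z. ft i l z u) (\<tau> i)"
    and ft_grad_consistent: "\<And>i l u. u \<in> prodset Kb \<Longrightarrow> gft i l (u $ l) u = gf i u $ l"
    and ft_grad_lip: "\<And>i l. \<exists>L. \<forall>z\<in>Kb l. \<forall>u\<in>prodset Kb. \<forall>v\<in>prodset Kb.
                 norm (gft i l z u - gft i l z v) \<le> L * norm (u - v)"
    and \<gamma>_pos: "\<And>t. 0 < \<gamma> t" and \<gamma>_le1: "\<And>t. \<gamma> t \<le> 1"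
    and \<gamma>_mono: "\<And>t. \<gamma> (Suc t) \<le> \<gamma> t"
    and \<gamma>_not_summable: "\<not> summable \<gamma>"
    and \<gamma>_sq_summable: "summable (\<lambda>t. (\<gamma> t)\<^sup>2)"
    and x0: "\<And>i. x 0 i \<in> prodset Kb"
    and y0: "\<And>i. y 0 i = gf i (x 0 i)"
    and \<phi>0: "\<And>i l. \<phi> 0 i l = 1"
    and xt_in: "\<And>t i. xt t i \<in> Kb (sel t i)"
    and xt_min: "\<And>t i z. z \<in> Kb (sel t i) \<Longrightarrow>
        ft i (sel t i) (xt t i) (x t i)
          + (of_nat CARD('n) *\<^sub>R (y t i $ sel t i) - gf i (x t i) $ sel t i) \<bullet> (xt t i - x t i $ sel t i)
          + r (sel t i) (xt t i)
        \<le> ft i (sel t i) z (x t i)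
          + (of_nat CARD('n) *\<^sub>R (y t i $ sel t i) - gf i (x t i) $ sel t i) \<bullet> (z - x t i $ sel t i)
          + r (sel t i) z"
    and \<phi>_upd: "\<And>t i l. \<phi> (Suc t) i l = (\<Sum>j\<in>nbrs E sel t i l. A t l i j * \<phi> t j l)"
    and x_upd: "\<And>t i l. x (Suc t) i $ l =
        (\<Sum>j\<in>nbrs E sel t i l. (A t l i j * \<phi> t j l / \<phi> (Suc t) i l) *\<^sub>R
            (x t j $ l + \<gamma> t *\<^sub>R (if l = sel t j then xt t j - x t j $ l else 0)))"
    and y_upd: "\<And>t i l. y (Suc t) i $ l =
        (\<Sum>j\<in>nbrs E sel t i l. (A t l i j / \<phi> (Suc t) i l) *\<^sub>R
            (\<phi> t j l *\<^sub>R (y t j $ l) + gf j (x (Suc t) j) $ l - gf j (x t j) $ l))"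
  shows "(\<lambda>t. norm (y t i - (1 / real CARD('n)) *\<^sub>R (\<Sum>j\<in>UNIV. gf j (x t j)))) \<longlonglongrightarrow> 0
       \<and> summable (\<lambda>t. \<gamma> t * norm (y t i - (1 / real CARD('n)) *\<^sub>R (\<Sum>j\<in>UNIV. gf j (x t j))))"
proof -
  interpret tracking_algorithm gf r Kb E sel A \<kappa> ft gft \<tau> \<gamma> x y \<phi> xt
    by (unfold_locales; fact assms)
  show ?thesis
    using tracking_error_negligible[of i] unfolding negligible_seq_def avg_grad_def by blast
qed

end
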